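(* Let $R$ be a nonsignaling bipartite resource of type $\mathsf{T}[\mathcal{X}]\,\mathsf{C}\to\mathsf{T}[\mathcal{A}]\,\mathsf{C}$, i.e. Bob's input $\mathcal{Y}$ and output $\mathcal{B}$ are classical, while Alice's input $\mathcal{X}$ and output $\mathcal{A}$ are of arbitrary type, and let $n=d[\mathcal{Y}]$ be the cardinality of Bob's input system. Then $R$ admits an $n$-symmetric extension if and only if $R$ is LOSR-free.
   Context: Systems have a dimension and a type in $\{\mathsf{I},\mathsf{C},\mathsf{Q}\}$ (trivial = dimension 1, classical, quantum). A resource is a completely positive linear map $R$ from operators on $\mathcal{X}\otimes\mathcal{Y}$ to operators on $\mathcal{A}\otimes\mathcal{B}$, trace preserving on product inputs, nonsignaling in both directions ($\mathrm{tr}_{\mathcal{A}}R[\xi\otimes\psi]$ independent of $\xi$, $\mathrm{tr}_{\mathcal{B}}R[\xi\otimes\psi]$ independent of $\psi$), with classicality constraints: for a classical output such as $\mathcal{B}$, $\langle i|R[\cdot]|j\rangle_{\mathcal{B}}=0$ for $i\neq j$; for a classical input such as $\mathcal{Y}$, $R[\xi\otimes|i\rangle\langle j|]=0$ for $i\ne j$. It is LOSR-free if $R=\sum_ip_iR^i_{\mathcal{A}|\mathcal{X}}\otimes R^i_{\mathcal{B}|\mathcal{Y}}$ for a probability distribution and single-party channels of the same types. An $n$-symmetric extension of $R$ is an $(n+1)$-party resource with parties $\mathcal{A}|\mathcal{X},\mathcal{B}_1|\mathcal{Y}_1,\dots,\mathcal{B}_n|\mathcal{Y}_n$ (copies of $\mathcal{B}|\mathcal{Y}$,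 of the same types), nonsignaling from any party to any other, invariant under all joint permutations of the copies, and whose reduction obtained by tracing out $\mathcal{B}_2,\dots,\mathcal{B}_n$ equals $R$. *)

theory Defs
  imports Complex_Main "HOL-Library.FuncSet" "HOL-Combinatorics.Permutations"
begin

datatype stype = TI | TC | TQ   (* trivial, classical, quantum *)

type_synonym system = "nat \<times> stype"

definition sdim :: "system \<Rightarrow> nat" where "sdim s = fst s"
definition styp :: "system \<Rightarrow> stype" where "styp s = snd s"

definition labels :: "system \<Rightarrow> nat set" where "labels s = {..<sdim s}"

definition valid_sys :: "system \<Rightarrow> bool" where
  "valid_sys s \<longleftrightarrow> 0 < sdim s \<and> (styp s = TI \<longrightarrow> sdim s = 1)"

section \<open>Operators and linear maps (in coordinates, relative to a finite carrier of basis labels)\<close>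

type_synonym 'i op = "'i \<Rightarrow> 'i \<Rightarrow> complex"
text \<open>A linear map from operators on basis 'i to operators on basis 'o, given by its
  matrix coefficients: K u u' i i' = <o| K[ |i><i'| ] |u'>.\<close>
type_synonym ('o,'i) kern = "'o \<Rightarrow> 'o \<Rightarrow> 'i \<Rightarrow> 'i \<Rightarrow> complex"

definition app :: "'i set \<Rightarrow> ('o,'i) kern \<Rightarrow> 'i op \<Rightarrow> 'o op" where
  "app SI K \<rho> = (\<lambda>u u'. \<Sum>i\<in>SI. \<Sum>i'\<in>SI. K u u' i i' * \<rho> i i')"

definition op_eq_on :: "'i set \<Rightarrow> 'i op \<Rightarrow> 'i op \<Rightarrow> bool" where
  "op_eq_on S M N \<longleftrightarrow> (\<forall>i\<in>S. \<forall>j\<in>S. M i j = N i j)"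

definition tr :: "'i set \<Rightarrow> 'i op \<Rightarrow> complex" where
  "tr S M = (\<Sum>i\<in>S. M i i)"

definition psd :: "'i set \<Rightarrow> 'i op \<Rightarrow> bool" where
  "psd S M \<longleftrightarrow> (\<forall>v :: 'i \<Rightarrow> complex.
      Im (\<Sum>i\<in>S. \<Sum>j\<in>S. cnj (v i) * M i j * v j) = 0 \<and>
      0 \<le> Re (\<Sum>i\<in>S. \<Sum>j\<in>S. cnj (v i) * M i j * v j))"

definition density :: "'i set \<Rightarrow> 'i op \<Rightarrow> bool" where
  "density S M \<longleftrightarrow> psd S M \<and> tr S M = 1"

definition CP :: "'i set \<Rightarrow> 'o set \<Rightarrow> ('o,'i) kern \<Rightarrow> bool" where
  "CP SI SO K \<longleftrightarrow> (\<forall>(k::nat) (\<sigma> :: (nat \<times> 'i) op).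
      psd ({..<k} \<times> SI) \<sigma> \<longrightarrow>
      psd ({..<k} \<times> SO)
        (\<lambda>(c,u) (c',u'). \<Sum>i\<in>SI. \<Sum>i'\<in>SI. K u u' i i' * \<sigma> (c,i) (c',i')))"

definition ketbra :: "'i \<Rightarrow> 'i \<Rightarrow> 'i op" where
  "ketbra i j = (\<lambda>a b. if a = i \<and> b = j then 1 else 0)"

definition otimes :: "'a op \<Rightarrow> 'b op \<Rightarrow> ('a \<times> 'b) op" where
  "otimes \<xi> \<psi> = (\<lambda>(x,y) (x',y'). \<xi> x x' * \<psi> y y')"

definition ktensor :: "('a,'x) kern \<Rightarrow> ('b,'y) kern \<Rightarrow> ('a \<times> 'b, 'x \<times> 'y) kern" where
  "ktensor KA KB = (\<lambda>(a,b) (a',b') (x,y) (x',y'). KA a a' x x' * KB b b' y y')"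

definition zero_op :: "'i op" where "zero_op = (\<lambda>_ _. 0)"

definition channel :: "system \<Rightarrow> system \<Rightarrow> (nat,nat) kern \<Rightarrow> bool" where
  "channel sX sA K \<longleftrightarrow>
     valid_sys sX \<and> valid_sys sA \<and>
     CP (labels sX) (labels sA) K \<and>
     (\<forall>\<xi>. tr (labels sA) (app (labels sX) K \<xi>) = tr (labels sX) \<xi>) \<and>
     (styp sA = TC \<longrightarrow> (\<forall>\<rho>. \<forall>i\<in>labels sA. \<forall>j\<in>labels sA. i \<noteq> j \<longrightarrow>
        app (labels sX) K \<rho> i j = 0)) \<and>
     (styp sX = TC \<longrightarrow> (\<forall>i\<in>labels sX. \<forall>j\<in>labels sX. i \<noteq> j \<longrightarrow>
        op_eq_on (labels sA) (app (labels sX) K (ketbra i j)) zero_op))"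

definition ptrA2 :: "nat set \<Rightarrow> (nat \<times> nat) op \<Rightarrow> nat op" where
  "ptrA2 SA M = (\<lambda>b b'. \<Sum>a\<in>SA. M (a,b) (a,b'))"

definition ptrB2 :: "nat set \<Rightarrow> (nat \<times> nat) op \<Rightarrow> nat op" where
  "ptrB2 SB M = (\<lambda>a a'. \<Sum>b\<in>SB. M (a,b) (a',b))"

definition resource ::
  "system \<Rightarrow> system \<Rightarrow> system \<Rightarrow> system \<Rightarrow> (nat \<times> nat, nat \<times> nat) kern \<Rightarrow> bool" where
  "resource sX sY sA sB R \<longleftrightarrow>
    (let SX = labels sX; SY = labels sY; SA = labels sA; SB = labels sB;
         RR = app (SX \<times> SY) R in
     valid_sys sX \<and> valid_sys sY \<and> valid_sys sA \<and> valid_sys sB \<and>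
     CP (SX \<times> SY) (SA \<times> SB) R \<and>
     (\<forall>\<xi> \<psi>. tr (SA \<times> SB) (RR (otimes \<xi> \<psi>)) = tr SX \<xi> * tr SY \<psi>) \<and>
     (\<forall>\<xi> \<xi>' \<psi>. density SX \<xi> \<and> density SX \<xi>' \<and> density SY \<psi> \<longrightarrow>
        op_eq_on SB (ptrA2 SA (RR (otimes \<xi> \<psi>))) (ptrA2 SA (RR (otimes \<xi>' \<psi>)))) \<and>
     (\<forall>\<xi> \<psi> \<psi>'. density SX \<xi> \<and> density SY \<psi> \<and> density SY \<psi>' \<longrightarrow>
        op_eq_on SA (ptrB2 SB (RR (otimes \<xi> \<psi>))) (ptrB2 SB (RR (otimes \<xi> \<psi>')))) \<and>
     (styp sA = TC \<longrightarrow> (\<forall>\<rho> a a' b b'. a \<in> SA \<and> a' \<in> SA \<and> b \<in> SB \<and> b' \<in> SB \<and> a \<noteq> a'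
        \<longrightarrow> RR \<rho> (a,b) (a',b') = 0)) \<and>
     (styp sB = TC \<longrightarrow> (\<forall>\<rho> a a' b b'. a \<in> SA \<and> a' \<in> SA \<and> b \<in> SB \<and> b' \<in> SB \<and> b \<noteq> b'
        \<longrightarrow> RR \<rho> (a,b) (a',b') = 0)) \<and>
     (styp sX = TC \<longrightarrow> (\<forall>i\<in>SX. \<forall>j\<in>SX. \<forall>\<psi>. i \<noteq> j \<longrightarrow>
        op_eq_on (SA \<times> SB) (RR (otimes (ketbra i j) \<psi>)) zero_op)) \<and>
     (styp sY = TC \<longrightarrow> (\<forall>i\<in>SY. \<forall>j\<in>SY. \<forall>\<xi>. i \<noteq> j \<longrightarrow>
        op_eq_on (SA \<times> SB) (RR (otimes \<xi> (ketbra i j))) zero_op)))"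

definition LOSR_free ::
  "system \<Rightarrow> system \<Rightarrow> system \<Rightarrow> system \<Rightarrow> (nat \<times> nat, nat \<times> nat) kern \<Rightarrow> bool" where
  "LOSR_free sX sY sA sB R \<longleftrightarrow>
    (\<exists>(m::nat) (p :: nat \<Rightarrow> real) (KA :: nat \<Rightarrow> (nat,nat) kern) (KB :: nat \<Rightarrow> (nat,nat) kern).
       (\<forall>i<m. 0 \<le> p i) \<and> (\<Sum>i<m. p i) = 1 \<and>
       (\<forall>i<m. channel sX sA (KA i) \<and> channel sY sB (KB i)) \<and>
       (\<forall>\<rho>. op_eq_on (labels sA \<times> labels sB)
          (app (labels sX \<times> labels sY) R \<rho>)
          (\<lambda>u u'. \<Sum>i<m. complex_of_real (p i) *
              app (labels sX \<times> labels sY) (ktensor (KA i) (KB i)) \<rho> u u')))"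

section \<open>(n+1)-party resources A|X, B_1|Y_1, ..., B_n|Y_n (copies indexed 0..n-1)\<close>

text \<open>Basis labels of the composite X \<otimes> Y_1 \<otimes> ... \<otimes> Y_n: pairs (x, ys) with ys \<in> PiE.\<close>
definition mlabels :: "nat set \<Rightarrow> nat \<Rightarrow> nat set \<Rightarrow> (nat \<times> (nat \<Rightarrow> nat)) set" where
  "mlabels S0 n S1 = S0 \<times> (PiE {..<n} (\<lambda>_. S1))"

definition prod_in :: "nat op \<Rightarrow> nat \<Rightarrow> (nat \<Rightarrow> nat op) \<Rightarrow> (nat \<times> (nat \<Rightarrow> nat)) op" where
  "prod_in \<xi> n \<psi>s = (\<lambda>(x,ys) (x',ys'). \<xi> x x' * (\<Prod>j<n. \<psi>s j (ys j) (ys' j)))"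

definition ptrA_m :: "nat set \<Rightarrow> (nat \<times> (nat \<Rightarrow> nat)) op \<Rightarrow> (nat \<Rightarrow> nat) op" where
  "ptrA_m SA M = (\<lambda>bs bs'. \<Sum>a\<in>SA. M (a,bs) (a,bs'))"

definition ptrB_m :: "nat set \<Rightarrow> nat \<Rightarrow> (nat \<times> (nat \<Rightarrow> nat)) op \<Rightarrow> (nat \<times> (nat \<Rightarrow> nat)) op" where
  "ptrB_m SB k M = (\<lambda>(a,bs) (a',bs'). \<Sum>b\<in>SB. M (a, bs(k := b)) (a', bs'(k := b)))"

text \<open>Trace out the copies B_2,...,B_n (indices 1..n-1), keeping A and B_1 (index 0).\<close>
definition ptr_rest :: "nat set \<Rightarrow> nat \<Rightarrow> (nat \<times> (nat \<Rightarrow> nat)) op \<Rightarrow> (nat \<times> nat) op" where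
  "ptr_rest SB n M = (\<lambda>(a,b) (a',b').
      \<Sum>bs\<in>{bs \<in> PiE {..<n} (\<lambda>_. SB). bs 0 = b}. M (a,bs) (a', bs(0 := b')))"

definition perm_op :: "(nat \<Rightarrow> nat) \<Rightarrow> (nat \<times> (nat \<Rightarrow> nat)) op \<Rightarrow> (nat \<times> (nat \<Rightarrow> nat)) op" where
  "perm_op \<pi> M = (\<lambda>(x,ys) (x',ys'). M (x, ys \<circ> \<pi>) (x', ys' \<circ> \<pi>))"

definition sym_ext ::
  "system \<Rightarrow> system \<Rightarrow> system \<Rightarrow> system \<Rightarrow> nat \<Rightarrow> (nat \<times> nat, nat \<times> nat) kern
   \<Rightarrow> (nat \<times> (nat \<Rightarrow> nat), nat \<times> (nat \<Rightarrow> nat)) kern \<Rightarrow> bool" where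
  "sym_ext sX sY sA sB n R E \<longleftrightarrow>
    (let SX = labels sX; SY = labels sY; SA = labels sA; SB = labels sB;
         IN = mlabels SX n SY; OUT = mlabels SA n SB;
         EE = app IN E in
     CP IN OUT E \<and>
     \<comment> \<open>trace preserving on product inputs\<close>
     (\<forall>\<xi> \<psi>s. tr OUT (EE (prod_in \<xi> n \<psi>s)) = tr SX \<xi> * (\<Prod>j<n. tr SY (\<psi>s j))) \<and>
     \<comment> \<open>nonsignaling: Alice's input does not influence the rest\<close>
     (\<forall>\<xi> \<xi>' \<psi>s. density SX \<xi> \<and> density SX \<xi>' \<and> (\<forall>j<n. density SY (\<psi>s j)) \<longrightarrow>
        op_eq_on (PiE {..<n} (\<lambda>_. SB))
          (ptrA_m SA (EE (prod_in \<xi> n \<psi>s))) (ptrA_m SA (EE (prod_in \<xi>' n \<psi>s)))) \<and>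
     \<comment> \<open>nonsignaling: the k-th copy's input does not influence the rest\<close>
     (\<forall>k<n. \<forall>\<xi> \<psi>s \<phi>. density SX \<xi> \<and> (\<forall>j<n. density SY (\<psi>s j)) \<and> density SY \<phi> \<longrightarrow>
        op_eq_on OUT
          (ptrB_m SB k (EE (prod_in \<xi> n \<psi>s)))
          (ptrB_m SB k (EE (prod_in \<xi> n (\<psi>s(k := \<phi>)))))) \<and>
     \<comment> \<open>classicality constraints (same types as in R)\<close>
     (styp sA = TC \<longrightarrow> (\<forall>\<rho> a bs a' bs'. (a,bs) \<in> OUT \<and> (a',bs') \<in> OUT \<and> a \<noteq> a'
        \<longrightarrow> EE \<rho> (a,bs) (a',bs') = 0)) \<and>
     (styp sB = TC \<longrightarrow> (\<forall>k<n. \<forall>\<rho> a bs a' bs'. (a,bs) \<in> OUT \<and> (a',bs') \<in> OUT \<and> bs k \<noteq> bs' k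
        \<longrightarrow> EE \<rho> (a,bs) (a',bs') = 0)) \<and>
     (styp sX = TC \<longrightarrow> (\<forall>i\<in>SX. \<forall>j\<in>SX. \<forall>\<psi>s. i \<noteq> j \<longrightarrow>
        op_eq_on OUT (EE (prod_in (ketbra i j) n \<psi>s)) zero_op)) \<and>
     (styp sY = TC \<longrightarrow> (\<forall>k<n. \<forall>i\<in>SY. \<forall>j\<in>SY. \<forall>\<xi> \<psi>s. i \<noteq> j \<longrightarrow>
        op_eq_on OUT (EE (prod_in \<xi> n (\<psi>s(k := ketbra i j)))) zero_op)) \<and>
     \<comment> \<open>invariance under joint permutations of the copies\<close>
     (\<forall>\<pi>. \<pi> permutes {..<n} \<longrightarrow>
        (\<forall>\<rho>. op_eq_on OUT (EE (perm_op \<pi> \<rho>)) (perm_op \<pi> (EE \<rho>)))) \<and>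
     \<comment> \<open>reduction (tracing out B_2..B_n) equals R (tensored with the trace on Y_2..Y_n)\<close>
     (\<forall>\<xi> \<psi>s. op_eq_on (SA \<times> SB)
        (ptr_rest SB n (EE (prod_in \<xi> n \<psi>s)))
        (\<lambda>u u'. app (SX \<times> SY) R (otimes \<xi> (\<psi>s 0)) u u' * (\<Prod>j\<in>{1..<n}. tr SY (\<psi>s j)))))"

end

theory Submission
  imports Defs "HOL-Library.Complex_Order"
begin

text \<open>
  If \<open>R = \<Sum>\<^sub>i p\<^sub>i A\<^sub>i \<otimes> B\<^sub>i\<close> with classical channels \<open>B\<^sub>i\<close>, letting all \<open>n\<close> copies of Bob apply
  \<open>B\<^sub>i\<close> for the same shared index \<open>i\<close> gives a symmetric extension.

  Conversely, let \<open>E\<close> be an \<open>n\<close>-symmetric extension and give copy \<open>j\<close> of Bob the input \<open>j\<close>, so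
  that all \<open>n = d[Y]\<close> inputs are queried at once. Since Alice cannot signal, the probability
  \<open>p(bs)\<close> of Bob's output string \<open>bs\<close> does not depend on her input, and Alice's state
  conditioned on \<open>bs\<close> defines a channel \<open>A\<^sub>b\<^sub>s\<close>. Permutation invariance moves the copy
  queried with \<open>y\<close> to the front, and the reduction property then gives
  \<open>R(a,b|x,y) = \<Sum>\<^sub>b\<^sub>s [bs y = b] p(bs) A\<^sub>b\<^sub>s(a|x)\<close>: an LOSR decomposition in which Bob
  deterministically outputs \<open>bs y\<close>.
\<close>

section \<open>Positive semidefinite operators\<close>

definition quad_form :: "'i set \<Rightarrow> 'i op \<Rightarrow> ('i \<Rightarrow> complex) \<Rightarrow> complex" where
  "quad_form S M v = (\<Sum>i\<in>S. \<Sum>j\<in>S. cnj (v i) * M i j * v j)"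

lemma psd_iff_quad_form_nonneg: "psd S M \<longleftrightarrow> (\<forall>v. 0 \<le> quad_form S M v)"
  by (auto simp: psd_def quad_form_def less_eq_complex_def)

lemma sum_reindex_support:
  assumes "finite S" "inj_on f T" "f ` T \<subseteq> S" "\<And>s. s \<in> S \<Longrightarrow> s \<notin> f ` T \<Longrightarrow> g s = 0"
  shows "sum g S = (\<Sum>t\<in>T. g (f t))"
proof -
  have "sum g S = sum g (f ` T)" using assms by (intro sum.mono_neutral_right) auto
  also have "\<dots> = (\<Sum>t\<in>T. g (f t))" using assms(2) by (simp add: sum.reindex)
  finally show ?thesis .
qed

lemma quad_form_reindex_support:
  assumes "finite S" "inj_on f T" "f ` T \<subseteq> S"
    and "\<And>s s'. s \<in> S \<Longrightarrow> s' \<in> S \<Longrightarrow> s \<notin> f ` T \<or> s' \<notin> f ` T \<Longrightarrow> cnj (v s) * M s s' * v s' = 0"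
  shows "quad_form S M v = quad_form T (\<lambda>i j. M (f i) (f j)) (v \<circ> f)"
proof -
  have "quad_form S M v = (\<Sum>t\<in>T. \<Sum>s'\<in>S. cnj (v (f t)) * M (f t) s' * v s')"
    unfolding quad_form_def using assms by (intro sum_reindex_support) (auto intro!: sum.neutral)
  also have "\<dots> = (\<Sum>t\<in>T. \<Sum>t'\<in>T. cnj (v (f t)) * M (f t) (f t') * v (f t'))"
    using assms by (intro sum.cong refl sum_reindex_support) (auto intro!: sum.neutral)
  finally show ?thesis by (simp add: quad_form_def)
qed

lemma psd_reindex:
  assumes "psd S M" "finite S" "inj_on f T" "f ` T \<subseteq> S"
  shows "psd T (\<lambda>i j. M (f i) (f j))"
  unfolding psd_iff_quad_form_nonneg
proof
  fix w :: "_ \<Rightarrow> complex"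
  define v where "v = (\<lambda>s. if s \<in> f ` T then w (the_inv_into T f s) else 0)"
  have "quad_form S M v = quad_form T (\<lambda>i j. M (f i) (f j)) (v \<circ> f)"
    using assms by (intro quad_form_reindex_support) (auto simp: v_def)
  also have "\<dots> = quad_form T (\<lambda>i j. M (f i) (f j)) w"
    unfolding quad_form_def using assms(3) by (intro sum.cong refl) (simp add: v_def the_inv_into_f_f)
  finally show "0 \<le> quad_form T (\<lambda>i j. M (f i) (f j)) w"
    using assms(1) by (metis psd_iff_quad_form_nonneg)
qed

lemma psd_extend_by_zero:
  assumes "psd T M" "finite S" "inj_on f T" "f ` T \<subseteq> S"
    and "\<And>i j. i \<in> T \<Longrightarrow> j \<in> T \<Longrightarrow> N (f i) (f j) = M i j"
    and "\<And>s s'. s \<in> S \<Longrightarrow> s' \<in> S \<Longrightarrow> s \<notin> f ` T \<or> s' \<notin> f ` T \<Longrightarrow> N s s' = 0"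
  shows "psd S N"
  unfolding psd_iff_quad_form_nonneg
proof
  fix v :: "_ \<Rightarrow> complex"
  have "quad_form S N v = quad_form T (\<lambda>i j. N (f i) (f j)) (v \<circ> f)"
    using assms by (intro quad_form_reindex_support) auto
  also have "\<dots> = quad_form T M (v \<circ> f)"
    unfolding quad_form_def using assms(5) by (intro sum.cong refl) simp
  finally show "0 \<le> quad_form S N v" using assms(1) by (metis psd_iff_quad_form_nonneg)
qed

lemma psd_block_embed:
  assumes "psd (C \<times> A) M" "finite (C \<times> (A \<times> B))" "b \<in> B"
  shows "psd (C \<times> (A \<times> B))
    (\<lambda>(c,(a,b1)) (c',(a',b2)). if b1 = b \<and> b2 = b then M (c,a) (c',a') else 0)"
proof (rule psd_extend_by_zero[OF assms(1,2), where f="\<lambda>(c,a). (c,(a,b))"])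
  show "(\<lambda>(c,a). (c,(a,b))) ` (C \<times> A) \<subseteq> C \<times> (A \<times> B)" using assms(3) by auto
  show "(\<lambda>(c,(a,b1)) (c',(a',b2)). if b1 = b \<and> b2 = b then M (c,a) (c',a') else 0) s s' = 0"
    if "s \<notin> (\<lambda>(c,a). (c,(a,b))) ` (C \<times> A) \<or> s' \<notin> (\<lambda>(c,a). (c,(a,b))) ` (C \<times> A)"
      "s \<in> C \<times> (A \<times> B)" "s' \<in> C \<times> (A \<times> B)" for s s'
    using that by (cases s; cases s') (auto simp: image_iff)
qed (auto simp: inj_on_def)

lemma psd_block_restrict:
  assumes "psd (C \<times> (A \<times> B)) M" "finite (C \<times> (A \<times> B))" "b \<in> B"
  shows "psd (C \<times> A) (\<lambda>(c,a) (c',a'). M (c,(a,b)) (c',(a',b)))"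
  using psd_reindex[OF assms(1,2), of "\<lambda>(c,a). (c,(a,b))" "C \<times> A"] assms(3)
  by (simp add: inj_on_def case_prod_beta' image_subset_iff)

lemma psd_cong: "op_eq_on S M N \<Longrightarrow> psd S M \<Longrightarrow> psd S N"
  unfolding psd_def op_eq_on_def by (metis (no_types, lifting) sum.cong)

lemma psd_sum: "finite I \<Longrightarrow> (\<And>i. i \<in> I \<Longrightarrow> psd S (M i)) \<Longrightarrow> psd S (\<lambda>a b. \<Sum>i\<in>I. M i a b)"
  unfolding psd_iff_quad_form_nonneg quad_form_def
  by (simp add: sum_distrib_left sum_distrib_right sum.swap[of _ I] sum_nonneg)

lemma psd_scale: "0 \<le> c \<Longrightarrow> psd S M \<Longrightarrow> psd S (\<lambda>a b. c * M a b)"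
proof -
  assume "0 \<le> c" "psd S M"
  moreover have "quad_form S (\<lambda>a b. c * M a b) v = c * quad_form S M v" for v
    unfolding quad_form_def by (simp add: sum_distrib_left mult_ac)
  ultimately show ?thesis unfolding psd_iff_quad_form_nonneg by (simp add: mult_nonneg_nonneg)
qed

lemma psd_outer_product: "psd S (\<lambda>k l. w k * cnj (w l))"
  unfolding psd_iff_quad_form_nonneg
proof
  fix v :: "_ \<Rightarrow> complex"
  define z where "z = (\<Sum>i\<in>S. cnj (v i) * w i)"
  have "quad_form S (\<lambda>k l. w k * cnj (w l)) v = z * cnj z"
    unfolding quad_form_def z_def by (simp add: sum_distrib_left sum_distrib_right mult_ac)
  also have "\<dots> = of_real ((norm z)\<^sup>2)" by (rule complex_norm_square[symmetric])
  finally show "0 \<le> quad_form S (\<lambda>k l. w k * cnj (w l)) v" by (simp add: less_eq_complex_def)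
qed

lemma psd_ketbra: "psd S (ketbra x x)"
proof -
  have "ketbra x x = (\<lambda>k l. (if k = x then 1 else 0) * cnj (if l = x then 1 else 0))"
    by (auto simp: ketbra_def fun_eq_iff)
  then show ?thesis by (simp only: psd_outer_product)
qed

lemma density_ketbra: "finite S \<Longrightarrow> x \<in> S \<Longrightarrow> density S (ketbra x x)"
  by (simp add: density_def psd_ketbra) (simp add: tr_def ketbra_def)

lemma psd_diag_nonneg:
  assumes "psd S M" "finite S" "i \<in> S"
  shows "0 \<le> M i i"
proof -
  have "cnj (if a = i then 1 else 0) * M a b * (if b = i then 1 else 0) =
      (if b = i then (if a = i then M a b else 0) else 0)" for a b
    by simp
  then have "quad_form S M (\<lambda>k. if k = i then 1 else 0) = M i i"
    using assms(2,3) unfolding quad_form_def by simp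
  then show ?thesis using assms(1) by (metis psd_iff_quad_form_nonneg)
qed

lemma sum_eq_two_terms:
  assumes "finite S" "i \<in> S" "j \<in> S" "i \<noteq> j" "\<And>k. k \<in> S \<Longrightarrow> k \<noteq> i \<Longrightarrow> k \<noteq> j \<Longrightarrow> g k = 0"
  shows "sum g S = g i + g j"
proof -
  have "sum g S = sum g {i,j}" using assms by (intro sum.mono_neutral_right) auto
  then show ?thesis using assms by simp
qed

lemma quad_form_two_terms:
  assumes "finite S" "i \<in> S" "j \<in> S" "i \<noteq> j"
  shows "quad_form S M (\<lambda>k. if k = i then 1 else if k = j then t else 0) =
    M i i + t * M i j + cnj t * M j i + cnj t * M j j * t"
  using assms unfolding quad_form_def
  by (subst sum_eq_two_terms[of S i j], simp_all, (subst sum_eq_two_terms[of S i j], simp_all)+)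

lemma phase_combination_eq_0:
  fixes u v :: complex
  assumes "\<And>t. t * cnj t = 1 \<Longrightarrow> t * u + cnj t * v = 0"
  shows "u = 0"
proof -
  have "u + v = 0" using assms[of 1] by simp
  moreover have "\<i> * (u - v) = 0" using assms[of "\<i>"] by (simp add: algebra_simps)
  ultimately show ?thesis by simp
qed

lemma psd_trace_zero:
  assumes M: "psd S M" and S: "finite S" and "tr S M = 0" and ij: "i \<in> S" "j \<in> S"
  shows "M i j = 0"
proof -
  have diag: "M k k = 0" if "k \<in> S" for k
    using assms that psd_diag_nonneg[OF M S] unfolding tr_def by (subst (asm) sum_nonneg_eq_0_iff) auto
  show ?thesis
  proof (cases "i = j")
    case True then show ?thesis using diag ij by simp
  next
    case False
    \<comment> \<open>the quadratic form at \<open>e\<^sub>i + t e\<^sub>j\<close> is \<open>t M\<^sub>i\<^sub>j + cnj t M\<^sub>j\<^sub>i\<close>, nonnegative for \<open>t\<close> and \<open>-t\<close>\<close>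
    have nonneg: "0 \<le> t * M i j + cnj t * M j i" for t
      using M quad_form_two_terms[OF S ij False, of M t] diag ij
      unfolding psd_iff_quad_form_nonneg by (metis add.right_neutral mult_zero_left mult_zero_right add_0)
    have "t * M i j + cnj t * M j i = 0" for t
    proof -
      have "0 \<le> - (t * M i j + cnj t * M j i)" using nonneg[of "-t"] by simp
      then show ?thesis using nonneg[of t] by (metis neg_0_le_iff_le order_antisym)
    qed
    then show ?thesis by (rule phase_combination_eq_0)
  qed
qed

section \<open>Linear maps on operators\<close>

lemma op_eq_onD: "op_eq_on S M N \<Longrightarrow> i \<in> S \<Longrightarrow> j \<in> S \<Longrightarrow> M i j = N i j"
  by (simp add: op_eq_on_def)

lemma sum_Times_iterated: "sum f (A \<times> B) = (\<Sum>x\<in>A. \<Sum>y\<in>B. f (x,y))"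
  by (subst sum.cartesian_product) simp

lemma sum_sum_delta:
  assumes "finite S" "finite T" "x \<in> S" "y \<in> T"
  shows "(\<Sum>a\<in>S. \<Sum>b\<in>T. if a = x \<and> b = y then f a b else 0) = f x y"
proof -
  have "(\<Sum>b\<in>T. if a = x \<and> b = y then f a b else 0) = (if a = x then f a y else 0)" for a
    using assms by (cases "a = x") auto
  then show ?thesis using assms by simp
qed

lemma sum_mult_delta_pair:
  fixes f :: "'b \<Rightarrow> 'a::semiring_0"
  assumes "finite B" "b1 \<in> B"
  shows "(\<Sum>b\<in>B. f b * (if b1 = b \<and> b2 = b then z else 0)) = (if b1 = b2 then f b1 * z else 0)"
proof (cases "b1 = b2")
  case True
  then show ?thesis using assms by (simp add: if_distrib[of "\<lambda>z. f _ * z"] cong: if_cong)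
qed (auto intro!: sum.neutral)

lemma app_ketbra: "finite S \<Longrightarrow> i \<in> S \<Longrightarrow> j \<in> S \<Longrightarrow> app S K (ketbra i j) u u' = K u u' i j"
  by (simp add: app_def ketbra_def if_distrib sum_sum_delta cong: if_cong)

lemma otimes_ketbra: "otimes (ketbra x x') (ketbra y y') = ketbra (x,y) (x',y')"
  by (auto simp: otimes_def ketbra_def fun_eq_iff)

lemma app_kern_cong:
  "(\<And>i i'. i \<in> S \<Longrightarrow> i' \<in> S \<Longrightarrow> K u u' i i' = L u u' i i') \<Longrightarrow> app S K \<rho> u u' = app S L \<rho> u u'"
  unfolding app_def by (intro sum.cong refl) auto

lemma app_kern_sum:
  "app S (\<lambda>u u' i i'. \<Sum>k\<in>I. c k * K k u u' i i') \<rho> u u' = (\<Sum>k\<in>I. c k * app S (K k) \<rho> u u')"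
proof -
  have "app S (\<lambda>u u' i i'. \<Sum>k\<in>I. c k * K k u u' i i') \<rho> u u' =
      (\<Sum>i\<in>S. \<Sum>i'\<in>S. \<Sum>k\<in>I. c k * (K k u u' i i' * \<rho> i i'))"
    by (simp add: app_def sum_distrib_right mult.assoc)
  also have "\<dots> = (\<Sum>i\<in>S. \<Sum>k\<in>I. \<Sum>i'\<in>S. c k * (K k u u' i i' * \<rho> i i'))"
    by (intro sum.cong refl sum.swap)
  also have "\<dots> = (\<Sum>k\<in>I. c k * app S (K k) \<rho> u u')"
    by (subst sum.swap) (simp add: app_def sum_distrib_left)
  finally show ?thesis .
qed

lemma app_ktensor_otimes:
  assumes "finite SX" "finite SY"
  shows "app (SX \<times> SY) (ktensor K L) (otimes \<xi> \<psi>) (a,b) (a',b') = app SX K \<xi> a a' * app SY L \<psi> b b'"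
proof -
  have "app (SX \<times> SY) (ktensor K L) (otimes \<xi> \<psi>) (a,b) (a',b') =
     (\<Sum>x\<in>SX. \<Sum>y\<in>SY. \<Sum>x'\<in>SX. \<Sum>y'\<in>SY. (K a a' x x' * \<xi> x x') * (L b b' y y' * \<psi> y y'))"
    by (simp add: app_def ktensor_def otimes_def sum_Times_iterated mult_ac)
  also have "\<dots> = (\<Sum>x\<in>SX. \<Sum>x'\<in>SX. \<Sum>y\<in>SY. \<Sum>y'\<in>SY. (K a a' x x' * \<xi> x x') * (L b b' y y' * \<psi> y y'))"
    by (intro sum.cong refl sum.swap)
  also have "\<dots> = app SX K \<xi> a a' * app SY L \<psi> b b'"
    unfolding app_def sum_distrib_right unfolding sum_distrib_left by (simp add: mult_ac)
  finally show ?thesis .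
qed

lemma CP_imp_psd_app:
  assumes K: "CP SI SO K" and "psd SI \<rho>" "finite SI" "finite SO"
  shows "psd SO (app SI K \<rho>)"
proof -
  define \<sigma> :: "(nat \<times> _) op" where "\<sigma> = (\<lambda>(c,i) (c',i'). \<rho> i i')"
  have "psd ({..<1::nat} \<times> SI) (\<lambda>p q. \<rho> (snd p) (snd q))"
    using assms by (intro psd_reindex[where f=snd]) (auto simp: inj_on_def less_one)
  then have "psd ({..<1} \<times> SI) \<sigma>" by (simp add: \<sigma>_def case_prod_beta')
  with K have "psd ({..<1} \<times> SO)
        (\<lambda>(c,u) (c',u'). \<Sum>i\<in>SI. \<Sum>i'\<in>SI. K u u' i i' * \<sigma> (c,i) (c',i'))"
    unfolding CP_def by blast
  from psd_reindex[OF this, of "\<lambda>u. (0,u)" SO] show ?thesis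
    using assms by (auto simp: app_def \<sigma>_def inj_on_def)
qed

lemma density_functional_diag:
  assumes "finite S" "\<And>\<xi>. density S \<xi> \<Longrightarrow> (\<Sum>x\<in>S. \<Sum>x'\<in>S. c x x' * \<xi> x x') = q" "x \<in> S"
  shows "c x x = q"
  using assms(2)[OF density_ketbra[OF assms(1,3)]] assms(1,3)
  by (simp add: ketbra_def if_distrib sum_sum_delta cong: if_cong)

lemma density_functional_offdiag:
  assumes S: "finite S" and const: "\<And>\<xi>. density S \<xi> \<Longrightarrow> (\<Sum>x\<in>S. \<Sum>x'\<in>S. c x x' * \<xi> x x') = q"
    and x: "x \<in> S" "x' \<in> S" "x \<noteq> x'"
  shows "c x x' = 0"
proof (rule phase_combination_eq_0)
  fix t :: complex assume t: "t * cnj t = 1"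
  define w where "w = (\<lambda>k. if k = x then t else if k = x' then 1 else 0)"
  define D where "D = (\<lambda>k l. complex_of_real (1/2) * (w k * cnj (w l)))"
  have "psd S D" unfolding D_def by (intro psd_scale psd_outer_product) (simp add: less_eq_complex_def)
  moreover have "tr S D = 1"
    using S x t unfolding tr_def by (subst sum_eq_two_terms[of S x x']) (auto simp: D_def w_def)
  ultimately have "(\<Sum>a\<in>S. \<Sum>b\<in>S. c a b * D a b) = q" by (intro const) (simp add: density_def)
  moreover have "(\<Sum>a\<in>S. \<Sum>b\<in>S. c a b * D a b) =
      (c x x + c x' x' + t * c x x' + cnj t * c x' x) / 2"
    using S x t unfolding D_def w_def
    by (subst sum_eq_two_terms[of S x x'], simp_all, (subst sum_eq_two_terms[of S x x'], simp_all)+)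
  moreover have "c x x = q" "c x' x' = q" using density_functional_diag[OF S const] x by auto
  ultimately show "t * c x x' + cnj t * c x' x = 0" by (simp add: field_simps)
qed

section \<open>Single-party channels\<close>

lemma channel_diag_nonneg:
  assumes "channel sX sA K" "x \<in> labels sX" "a \<in> labels sA"
  shows "0 \<le> K a a x x"
proof -
  have fin: "finite (labels sX)" "finite (labels sA)" by (simp_all add: labels_def)
  have "psd (labels sA) (app (labels sX) K (ketbra x x))"
    using assms fin by (intro CP_imp_psd_app psd_ketbra) (simp_all add: channel_def)
  then have "0 \<le> app (labels sX) K (ketbra x x) a a" using fin(2) assms(3) by (rule psd_diag_nonneg)
  then show ?thesis using fin assms(2) by (simp add: app_ketbra)
qed

lemma channel_diag_sum:
  assumes "channel sX sA K" "x \<in> labels sX"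
  shows "(\<Sum>a\<in>labels sA. K a a x x) = 1"
proof -
  have fin: "finite (labels sX)" by (simp add: labels_def)
  have "tr (labels sA) (app (labels sX) K (ketbra x x)) = tr (labels sX) (ketbra x x)"
    using assms(1) by (simp add: channel_def)
  also have "\<dots> = 1" using density_ketbra[OF fin assms(2)] by (simp add: density_def)
  finally show ?thesis by (simp add: tr_def app_ketbra[OF fin assms(2,2)])
qed

lemma classical_channel_kern:
  assumes ch: "channel sY sB K" and "styp sY = TC" "styp sB = TC"
    and b: "b \<in> labels sB" "b' \<in> labels sB" and y: "y \<in> labels sY" "y' \<in> labels sY"
  shows "K b b' y y' = (if b = b' \<and> y = y' then complex_of_real (Re (K b b y y)) else 0)"
proof -
  have fin: "finite (labels sY)" by (simp add: labels_def)
  consider "b \<noteq> b'" | "b = b'" "y \<noteq> y'" | "b = b'" "y = y'" by blast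
  then show ?thesis
  proof cases
    case 1
    then have "app (labels sY) K (ketbra y y') b b' = 0" using assms unfolding channel_def by blast
    then show ?thesis using 1 by (simp add: app_ketbra[OF fin y])
  next
    case 2
    then have "op_eq_on (labels sB) (app (labels sY) K (ketbra y y')) zero_op"
      using assms unfolding channel_def by blast
    then show ?thesis using 2 b by (simp add: op_eq_on_def zero_op_def app_ketbra[OF fin y])
  next
    case 3
    then show ?thesis using channel_diag_nonneg[OF ch y(1) b(1)]
      by (simp add: less_eq_complex_def complex_eq_iff)
  qed
qed

definition det_kern :: "(nat \<Rightarrow> nat) \<Rightarrow> (nat,nat) kern" where
  "det_kern f = (\<lambda>b b' y y'. if b = b' \<and> y = y' \<and> b = f y then 1 else 0)"

lemma CP_det_kern:
  assumes f: "f ` SY \<subseteq> SB" and fin: "finite SY" "finite SB"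
  shows "CP SY SB (det_kern f)"
  unfolding CP_def
proof (intro allI impI)
  fix k :: nat and \<sigma> :: "(nat \<times> nat) op"
  assume \<sigma>: "psd ({..<k} \<times> SY) \<sigma>"
  \<comment> \<open>the output is a sum over inputs \<open>y\<close> of the blocks \<open>\<sigma>\<^sub>y\<^sub>y\<close>, placed at output \<open>f y\<close>\<close>
  define N where "N y = (\<lambda>(c,b) (c',b'). if b = f y \<and> b' = f y then \<sigma> (c,y) (c',y) else 0)" for y
  have "psd ({..<k} \<times> SB) (N y)" if y: "y \<in> SY" for y
  proof (rule psd_extend_by_zero[where f="\<lambda>c. (c, f y)" and T="{..<k}"])
    show "psd {..<k} (\<lambda>c c'. \<sigma> (c,y) (c',y))"
      using \<sigma> fin y by (intro psd_reindex[where f="\<lambda>c. (c,y)"]) (auto simp: inj_on_def)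
  qed (use f fin y in \<open>auto simp: N_def inj_on_def\<close>)
  then have "psd ({..<k} \<times> SB) (\<lambda>s s'. \<Sum>y\<in>SY. N y s s')"
    using fin by (intro psd_sum) auto
  moreover have "(\<Sum>y\<in>SY. N y (c,b) (c',b')) =
      (\<Sum>y\<in>SY. \<Sum>y'\<in>SY. det_kern f b b' y y' * \<sigma> (c,y) (c',y'))" for c b c' b'
    using fin by (intro sum.cong refl) (auto simp: N_def det_kern_def if_distrib[of "\<lambda>z. z * _"] cong: if_cong intro!: sum.neutral)
  ultimately show "psd ({..<k} \<times> SB)
      (\<lambda>(c,b) (c',b'). \<Sum>y\<in>SY. \<Sum>y'\<in>SY. det_kern f b b' y y' * \<sigma> (c,y) (c',y'))"
    by (auto simp: op_eq_on_def elim!: psd_cong[rotated])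
qed

lemma channel_det_kern:
  assumes "valid_sys sY" "valid_sys sB" "\<And>y. y \<in> labels sY \<Longrightarrow> f y \<in> labels sB"
  shows "channel sY sB (det_kern f)"
  unfolding channel_def
proof (intro conjI allI impI ballI)
  show "CP (labels sY) (labels sB) (det_kern f)"
    using assms by (intro CP_det_kern) (auto simp: labels_def)
next
  fix \<psi>
  have "(\<Sum>y'\<in>labels sY. det_kern f b b y y' * \<psi> y y') = (if b = f y then \<psi> y y else 0)"
    if "y \<in> labels sY" for b y
    using that by (cases "b = f y") (simp_all add: det_kern_def labels_def if_distrib[of "\<lambda>z. z * _"] cong: if_cong)
  then have "tr (labels sB) (app (labels sY) (det_kern f) \<psi>) =
      (\<Sum>b\<in>labels sB. \<Sum>y\<in>labels sY. if b = f y then \<psi> y y else 0)"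
    by (simp add: tr_def app_def)
  also have "\<dots> = tr (labels sY) \<psi>"
    using assms(3) by (subst sum.swap) (simp add: tr_def labels_def)
  finally show "tr (labels sB) (app (labels sY) (det_kern f) \<psi>) = tr (labels sY) \<psi>" .
qed (use assms in \<open>auto simp: app_def det_kern_def op_eq_on_def zero_op_def ketbra_def labels_def
    intro!: sum.neutral\<close>)

section \<open>Copies of Bob's system\<close>

lemma bij_betw_comp_permutes_PiE:
  assumes "\<pi> permutes {..<n}"
  shows "bij_betw (\<lambda>ys. ys \<circ> \<pi>) (PiE {..<n} (\<lambda>_. S)) (PiE {..<n} (\<lambda>_. S))"
proof -
  have comp_in: "ys \<circ> \<sigma> \<in> PiE {..<n} (\<lambda>_. S)" if "ys \<in> PiE {..<n} (\<lambda>_. S)" "\<sigma> permutes {..<n}" for ys \<sigma>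
    using that permutes_in_image[OF that(2)] by (auto simp: PiE_iff extensional_def permutes_not_in)
  show ?thesis
  proof (rule bij_betw_byWitness[where f'="\<lambda>ys. ys \<circ> inv \<pi>"])
    show "\<forall>ys\<in>PiE {..<n} (\<lambda>_. S). ys \<circ> \<pi> \<circ> inv \<pi> = ys"
      "\<forall>ys\<in>PiE {..<n} (\<lambda>_. S). ys \<circ> inv \<pi> \<circ> \<pi> = ys"
      using permutes_inv_o[OF assms] by (simp_all add: comp_assoc)
  qed (use comp_in assms permutes_inv[OF assms] in auto)
qed

lemma comp_permutes_eq_iff: "\<pi> permutes S \<Longrightarrow> f \<circ> \<pi> = g \<circ> \<pi> \<longleftrightarrow> f = g"
  by (metis permutes_surj surj_fun_eq)

lemma perm_op_prod_in:
  assumes "\<pi> permutes {..<n}"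
  shows "perm_op \<pi> (prod_in \<xi> n \<psi>s) = prod_in \<xi> n (\<psi>s \<circ> inv \<pi>)"
proof -
  have "(\<Prod>j<n. \<psi>s j (ys (\<pi> j)) (ys' (\<pi> j))) = (\<Prod>j<n. \<psi>s (inv \<pi> j) (ys j) (ys' j))" for ys ys'
    using prod.permute[OF assms, of "\<lambda>j. \<psi>s (inv \<pi> j) (ys j) (ys' j)"] permutes_inverses(2)[OF assms]
    by simp
  then show ?thesis by (auto simp: perm_op_def prod_in_def fun_eq_iff)
qed

lemma sum_prod_PiE_first_fixed:
  fixes f :: "nat \<Rightarrow> 'a \<Rightarrow> 'b::comm_semiring_1"
  assumes "0 < n" "b \<in> S" "finite S"
  shows "(\<Sum>bs\<in>{bs \<in> PiE {..<n} (\<lambda>_. S). bs 0 = b}. \<Prod>j<n. f j (bs j)) =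
    f 0 b * (\<Prod>j\<in>{1..<n}. \<Sum>s\<in>S. f j s)"
proof -
  have "{bs \<in> PiE {..<n} (\<lambda>_. S). bs 0 = b} = PiE {..<n} (\<lambda>j. if j = 0 then {b} else S)"
  proof (intro set_eqI iffI)
    fix bs assume bs: "bs \<in> PiE {..<n} (\<lambda>j. if j = 0 then {b} else S)"
    then have "bs 0 = b" using assms(1) by (auto simp: PiE_iff dest!: bspec[of _ _ 0])
    moreover have "bs \<in> PiE {..<n} (\<lambda>_. S)" using bs assms(2) by (auto simp: PiE_iff split: if_splits)
    ultimately show "bs \<in> {bs \<in> PiE {..<n} (\<lambda>_. S). bs 0 = b}" by simp
  qed (auto simp: PiE_iff)
  then have "(\<Sum>bs\<in>{bs \<in> PiE {..<n} (\<lambda>_. S). bs 0 = b}. \<Prod>j<n. f j (bs j)) =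
      (\<Prod>j<n. \<Sum>s\<in>(if j = 0 then {b} else S). f j s)"
    using assms(3) by (subst prod_sum_PiE) auto
  also have "\<dots> = f 0 b * (\<Prod>j\<in>{1..<n}. \<Sum>s\<in>S. f j s)"
  proof -
    have "{..<n} = insert 0 {1..<n}" using assms(1) by auto
    then show ?thesis by simp
  qed
  finally show ?thesis .
qed

lemma ptr_rest_diag:
  "ptr_rest SB n M (a,b) (a',b) = (\<Sum>bs\<in>{bs \<in> PiE {..<n} (\<lambda>_. SB). bs 0 = b}. M (a,bs) (a',bs))"
  unfolding ptr_rest_def prod.case by (intro sum.cong refl) (auto simp: fun_upd_idem)

lemma LOSR_freeI:
  assumes "finite I" "\<And>i. i \<in> I \<Longrightarrow> 0 \<le> p i" "(\<Sum>i\<in>I. p i) = 1"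
    and "\<And>i. i \<in> I \<Longrightarrow> channel sX sA (KA i)" "\<And>i. i \<in> I \<Longrightarrow> channel sY sB (KB i)"
    and "\<And>\<rho> u u'. u \<in> labels sA \<times> labels sB \<Longrightarrow> u' \<in> labels sA \<times> labels sB \<Longrightarrow>
      app (labels sX \<times> labels sY) R \<rho> u u' =
      (\<Sum>i\<in>I. complex_of_real (p i) * app (labels sX \<times> labels sY) (ktensor (KA i) (KB i)) \<rho> u u')"
  shows "LOSR_free sX sY sA sB R"
proof -
  obtain h where h: "bij_betw h {..<card I} I"
    using ex_bij_betw_nat_finite[OF assms(1)] by (auto simp: atLeast0LessThan)
  then have h_in: "h k \<in> I" if "k < card I" for k using that by (auto simp: bij_betw_def)
  show ?thesis
    unfolding LOSR_free_def
  proof (intro exI conjI allI impI)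
    show "(\<Sum>k<card I. (p \<circ> h) k) = 1" using sum.reindex_bij_betw[OF h, of p] assms(3) by simp
    show "op_eq_on (labels sA \<times> labels sB) (app (labels sX \<times> labels sY) R \<rho>)
      (\<lambda>u u'. \<Sum>k<card I. complex_of_real ((p \<circ> h) k) *
        app (labels sX \<times> labels sY) (ktensor ((KA \<circ> h) k) ((KB \<circ> h) k)) \<rho> u u')" for \<rho>
    proof (unfold op_eq_on_def, intro ballI)
      fix u u' assume "u \<in> labels sA \<times> labels sB" "u' \<in> labels sA \<times> labels sB"
      then show "app (labels sX \<times> labels sY) R \<rho> u u' = (\<Sum>k<card I. complex_of_real ((p \<circ> h) k) *
          app (labels sX \<times> labels sY) (ktensor ((KA \<circ> h) k) ((KB \<circ> h) k)) \<rho> u u')"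
        using assms(6) sum.reindex_bij_betw[OF h, of "\<lambda>i. complex_of_real (p i) *
          app (labels sX \<times> labels sY) (ktensor (KA i) (KB i)) \<rho> u u'"] by simp
    qed
  qed (use assms h_in in auto)
qed

locale extension_labels =
  fixes sX sY sA sB :: system and n :: nat
begin

abbreviation "SX \<equiv> labels sX"
abbreviation "SY \<equiv> labels sY"
abbreviation "SA \<equiv> labels sA"
abbreviation "SB \<equiv> labels sB"
abbreviation "YY \<equiv> PiE {..<n} (\<lambda>_. SY)"
abbreviation "BB \<equiv> PiE {..<n} (\<lambda>_. SB)"
abbreviation "IN \<equiv> mlabels SX n SY"
abbreviation "OUT \<equiv> mlabels SA n SB"

lemma finite_sets: "finite SX" "finite SY" "finite SA" "finite SB" "finite YY" "finite BB"
  by (simp_all add: labels_def finite_PiE)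

end

section \<open>An LOSR-free resource has a symmetric extension\<close>

locale LOSR_model = extension_labels sX sY sA sB n
  for sX sY sA sB :: system and n :: nat +
  fixes R :: "(nat \<times> nat, nat \<times> nat) kern"
    and m :: nat and p :: "nat \<Rightarrow> real" and KA KB :: "nat \<Rightarrow> (nat,nat) kern"
  assumes classical_Y: "styp sY = TC" and classical_B: "styp sB = TC"
    and p_nonneg: "\<And>i. i < m \<Longrightarrow> 0 \<le> p i" and p_sum: "(\<Sum>i<m. p i) = 1"
    and channel_A: "\<And>i. i < m \<Longrightarrow> channel sX sA (KA i)"
    and channel_B: "\<And>i. i < m \<Longrightarrow> channel sY sB (KB i)"
    and decomp: "\<And>\<rho>. op_eq_on (labels sA \<times> labels sB) (app (labels sX \<times> labels sY) R \<rho>)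
      (\<lambda>u u'. \<Sum>i<m. complex_of_real (p i) * app (labels sX \<times> labels sY) (ktensor (KA i) (KB i)) \<rho> u u')"
    and n_pos: "0 < n"
begin

definition bob_prob :: "nat \<Rightarrow> nat \<Rightarrow> nat \<Rightarrow> real" where
  "bob_prob i b y = Re (KB i b b y y)"

definition copies_prob :: "nat \<Rightarrow> (nat \<Rightarrow> nat) \<Rightarrow> (nat \<Rightarrow> nat) \<Rightarrow> real" where
  "copies_prob i bs ys = (\<Prod>j<n. bob_prob i (bs j) (ys j))"

definition bob_output :: "nat \<Rightarrow> nat op \<Rightarrow> nat \<Rightarrow> complex" where
  "bob_output i \<psi> b = (\<Sum>y\<in>SY. complex_of_real (bob_prob i b y) * \<psi> y y)"

text \<open>The extension \<open>\<Sum>\<^sub>i p\<^sub>i KA\<^sub>i \<otimes> KB\<^sub>i \<otimes> \<dots> \<otimes> KB\<^sub>i\<close>: all copies of Bob share the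
  hidden variable \<open>i\<close>.\<close>

definition sym_kern :: "(nat \<times> (nat \<Rightarrow> nat), nat \<times> (nat \<Rightarrow> nat)) kern" where
  "sym_kern = (\<lambda>(a,bs) (a',bs') (x,ys) (x',ys'). if bs = bs' \<and> ys = ys' then
      (\<Sum>i<m. complex_of_real (p i * copies_prob i bs ys) * KA i a a' x x') else 0)"

lemma KB_classical:
  "i < m \<Longrightarrow> b \<in> SB \<Longrightarrow> b' \<in> SB \<Longrightarrow> y \<in> SY \<Longrightarrow> y' \<in> SY \<Longrightarrow>
    KB i b b' y y' = (if b = b' \<and> y = y' then complex_of_real (bob_prob i b y) else 0)"
  unfolding bob_prob_def using classical_channel_kern[OF channel_B classical_Y classical_B] .

lemma bob_prob_nonneg: "i < m \<Longrightarrow> b \<in> SB \<Longrightarrow> y \<in> SY \<Longrightarrow> 0 \<le> bob_prob i b y"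
  unfolding bob_prob_def using channel_diag_nonneg[OF channel_B] by (simp add: less_eq_complex_def)

lemma sum_bob_prob: "i < m \<Longrightarrow> y \<in> SY \<Longrightarrow> (\<Sum>b\<in>SB. bob_prob i b y) = 1"
  unfolding bob_prob_def using channel_diag_sum[OF channel_B] by (metis Re_sum one_complex.sel)

lemma copies_prob_nonneg: "i < m \<Longrightarrow> bs \<in> BB \<Longrightarrow> ys \<in> YY \<Longrightarrow> 0 \<le> copies_prob i bs ys"
  unfolding copies_prob_def using bob_prob_nonneg by (auto intro!: prod_nonneg simp: PiE_iff)

lemma copies_prob_permute:
  "\<pi> permutes {..<n} \<Longrightarrow> copies_prob i (bs \<circ> \<pi>) (ys \<circ> \<pi>) = copies_prob i bs ys"
  unfolding copies_prob_def by (subst prod.permute[of \<pi> "{..<n}"]) (simp_all add: comp_def)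

lemma sum_bob_output: "i < m \<Longrightarrow> (\<Sum>b\<in>SB. bob_output i \<psi> b) = tr SY \<psi>"
  unfolding bob_output_def tr_def
  by (subst sum.swap) (simp add: sum_distrib_right[symmetric] sum_bob_prob flip: of_real_sum)

lemma app_KB:
  assumes "i < m" "b \<in> SB" "b' \<in> SB"
  shows "app SY (KB i) \<psi> b b' = (if b = b' then bob_output i \<psi> b else 0)"
proof -
  have "app SY (KB i) \<psi> b b' =
      (\<Sum>y\<in>SY. \<Sum>y'\<in>SY. (if b = b' \<and> y = y' then complex_of_real (bob_prob i b y) else 0) * \<psi> y y')"
    unfolding app_def using KB_classical[OF assms] by (intro sum.cong refl) auto
  then show ?thesis using finite_sets by (simp add: bob_output_def if_distrib[of "\<lambda>z. z * _"] cong: if_cong)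
qed

lemma app_sym_kern:
  "app IN sym_kern \<rho> (a,bs) (a',bs') = (if bs = bs' then (\<Sum>i<m. \<Sum>ys\<in>YY.
      complex_of_real (p i * copies_prob i bs ys) * app SX (KA i) (\<lambda>x x'. \<rho> (x,ys) (x',ys)) a a') else 0)"
proof -
  define c where "c i ys = complex_of_real (p i * copies_prob i bs ys)" for i ys
  define T where "T x ys x' = sym_kern (a,bs) (a',bs') (x,ys) (x',ys) * \<rho> (x,ys) (x',ys)" for x ys x'
  have diag: "(\<Sum>q'\<in>SX \<times> YY. sym_kern (a,bs) (a',bs') (x,ys) q' * \<rho> (x,ys) q') = (\<Sum>x'\<in>SX. T x ys x')"
    if "ys \<in> YY" for x ys
    unfolding T_def using that finite_sets
    by (intro sum_reindex_support[where f="\<lambda>x'. (x',ys)"]) (auto simp: sym_kern_def inj_on_def)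
  have "app IN sym_kern \<rho> (a,bs) (a',bs') = (\<Sum>q\<in>SX \<times> YY. \<Sum>x'\<in>SX. T (fst q) (snd q) x')"
    unfolding app_def mlabels_def using diag by (intro sum.cong refl) auto
  also have "\<dots> = (\<Sum>x\<in>SX. \<Sum>ys\<in>YY. \<Sum>x'\<in>SX. T x ys x')"
    by (simp only: sum_Times_iterated fst_conv snd_conv)
  also have "\<dots> = (if bs = bs' then (\<Sum>x\<in>SX. \<Sum>ys\<in>YY. \<Sum>x'\<in>SX. \<Sum>i<m. c i ys * (KA i a a' x x' * \<rho> (x,ys) (x',ys))) else 0)"
    by (simp add: T_def sym_kern_def c_def sum_distrib_right sum_distrib_left mult_ac)
  also have "(\<Sum>x\<in>SX. \<Sum>ys\<in>YY. \<Sum>x'\<in>SX. \<Sum>i<m. c i ys * (KA i a a' x x' * \<rho> (x,ys) (x',ys)))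
      = (\<Sum>i<m. \<Sum>ys\<in>YY. \<Sum>x\<in>SX. \<Sum>x'\<in>SX. c i ys * (KA i a a' x x' * \<rho> (x,ys) (x',ys)))"
    by (subst sum.swap, subst (2) sum.swap, subst (3) sum.swap, subst sum.swap) (rule refl)
  also have "\<dots> = (\<Sum>i<m. \<Sum>ys\<in>YY. c i ys * app SX (KA i) (\<lambda>x x'. \<rho> (x,ys) (x',ys)) a a')"
    by (simp add: app_def sum_distrib_left)
  finally show ?thesis by (simp add: c_def)
qed

lemma app_sym_kern_prod_in:
  "app IN sym_kern (prod_in \<xi> n \<psi>s) (a,bs) (a',bs') = (if bs = bs' then (\<Sum>i<m.
      complex_of_real (p i) * app SX (KA i) \<xi> a a' * (\<Prod>j<n. bob_output i (\<psi>s j) (bs j))) else 0)"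
proof -
  have "(\<Sum>ys\<in>YY. complex_of_real (p i * copies_prob i bs ys) *
      app SX (KA i) (\<lambda>x x'. prod_in \<xi> n \<psi>s (x,ys) (x',ys)) a a') =
    complex_of_real (p i) * app SX (KA i) \<xi> a a' * (\<Prod>j<n. bob_output i (\<psi>s j) (bs j))" for i bs
  proof -
    have factor: "complex_of_real (p i * copies_prob i bs ys) *
        app SX (KA i) (\<lambda>x x'. prod_in \<xi> n \<psi>s (x,ys) (x',ys)) a a' =
      (complex_of_real (p i) * app SX (KA i) \<xi> a a') *
        (\<Prod>j<n. complex_of_real (bob_prob i (bs j) (ys j)) * \<psi>s j (ys j) (ys j))" for ys
      by (simp add: app_def prod_in_def copies_prob_def prod.distrib sum_distrib_left mult_ac)
    have expand: "(\<Prod>j<n. bob_output i (\<psi>s j) (bs j)) =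
        (\<Sum>ys\<in>YY. \<Prod>j<n. complex_of_real (bob_prob i (bs j) (ys j)) * \<psi>s j (ys j) (ys j))"
      unfolding bob_output_def using finite_sets by (subst prod_sum_PiE) auto
    show ?thesis unfolding factor expand by (simp add: sum_distrib_left)
  qed
  then show ?thesis by (simp add: app_sym_kern del: of_real_mult)
qed

lemma sum_prod_bob_output: "i < m \<Longrightarrow> (\<Sum>bs\<in>BB. \<Prod>j<n. bob_output i (\<psi>s j) (bs j)) = (\<Prod>j<n. tr SY (\<psi>s j))"
  using finite_sets by (subst prod_sum_PiE[symmetric]) (auto simp: sum_bob_output)

lemma tr_sym_kern_prod_in: "tr OUT (app IN sym_kern (prod_in \<xi> n \<psi>s)) = tr SX \<xi> * (\<Prod>j<n. tr SY (\<psi>s j))"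
proof -
  have "tr OUT (app IN sym_kern (prod_in \<xi> n \<psi>s)) = (\<Sum>a\<in>SA. \<Sum>bs\<in>BB. \<Sum>i<m.
      complex_of_real (p i) * app SX (KA i) \<xi> a a * (\<Prod>j<n. bob_output i (\<psi>s j) (bs j)))"
    by (simp add: tr_def mlabels_def[of SA n SB] sum_Times_iterated app_sym_kern_prod_in)
  also have "\<dots> = (\<Sum>i<m. \<Sum>a\<in>SA. \<Sum>bs\<in>BB.
      complex_of_real (p i) * app SX (KA i) \<xi> a a * (\<Prod>j<n. bob_output i (\<psi>s j) (bs j)))"
    by (subst (2) sum.swap, subst sum.swap) (rule refl)
  also have "\<dots> = (\<Sum>i<m. complex_of_real (p i) *
      (tr SA (app SX (KA i) \<xi>) * (\<Sum>bs\<in>BB. \<Prod>j<n. bob_output i (\<psi>s j) (bs j))))"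
    by (simp only: tr_def sum_product) (simp add: sum_distrib_left mult.assoc)
  also have "\<dots> = (\<Sum>i<m. complex_of_real (p i)) * (tr SX \<xi> * (\<Prod>j<n. tr SY (\<psi>s j)))"
    using channel_A by (simp add: sum_distrib_right channel_def sum_prod_bob_output)
  finally show ?thesis by (simp add: p_sum flip: of_real_sum)
qed

lemma ptrA_sym_kern_prod_in:
  "ptrA_m SA (app IN sym_kern (prod_in \<xi> n \<psi>s)) bs bs' = (if bs = bs' then
    (\<Sum>i<m. complex_of_real (p i) * tr SX \<xi> * (\<Prod>j<n. bob_output i (\<psi>s j) (bs j))) else 0)"
proof -
  have "ptrA_m SA (app IN sym_kern (prod_in \<xi> n \<psi>s)) bs bs' = (if bs = bs' then (\<Sum>a\<in>SA. \<Sum>i<m.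
      complex_of_real (p i) * app SX (KA i) \<xi> a a * (\<Prod>j<n. bob_output i (\<psi>s j) (bs j))) else 0)"
    by (simp add: ptrA_m_def app_sym_kern_prod_in)
  also have "\<dots> = (if bs = bs' then (\<Sum>i<m.
      complex_of_real (p i) * tr SA (app SX (KA i) \<xi>) * (\<Prod>j<n. bob_output i (\<psi>s j) (bs j))) else 0)"
    by (subst sum.swap) (simp add: tr_def sum_distrib_left sum_distrib_right)
  finally show ?thesis using channel_A by (simp add: channel_def)
qed

lemma ptrB_sym_kern_prod_in:
  assumes k: "k < n"
  shows "ptrB_m SB k (app IN sym_kern (prod_in \<xi> n \<psi>s)) (a,bs) (a',bs') =
    (if bs(k := 0) = bs'(k := 0) then (\<Sum>i<m. complex_of_real (p i) * app SX (KA i) \<xi> a a' *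
      tr SY (\<psi>s k) * (\<Prod>j\<in>{..<n}-{k}. bob_output i (\<psi>s j) (bs j))) else 0)"
proof -
  define same where "same \<longleftrightarrow> bs(k := 0) = bs'(k := 0)"
  have upd_eq: "bs(k := b) = bs'(k := b) \<longleftrightarrow> same" for b
    by (auto simp: same_def fun_eq_iff)
  have prod_upd: "(\<Prod>j<n. bob_output i (\<psi>s j) ((bs(k := b)) j)) =
      bob_output i (\<psi>s k) b * (\<Prod>j\<in>{..<n}-{k}. bob_output i (\<psi>s j) (bs j))" for i b
    using k by (subst prod.remove[of _ k]) (auto intro!: prod.cong)
  have "ptrB_m SB k (app IN sym_kern (prod_in \<xi> n \<psi>s)) (a,bs) (a',bs') =
      (if same then (\<Sum>b\<in>SB. \<Sum>i<m. complex_of_real (p i) * app SX (KA i) \<xi> a a' *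
        (bob_output i (\<psi>s k) b * (\<Prod>j\<in>{..<n}-{k}. bob_output i (\<psi>s j) (bs j)))) else 0)"
    by (simp add: ptrB_m_def app_sym_kern_prod_in upd_eq prod_upd del: fun_upd_apply)
  also have "\<dots> = (if same then (\<Sum>i<m. complex_of_real (p i) * app SX (KA i) \<xi> a a' *
      (\<Sum>b\<in>SB. bob_output i (\<psi>s k) b) * (\<Prod>j\<in>{..<n}-{k}. bob_output i (\<psi>s j) (bs j))) else 0)"
    by (subst sum.swap) (simp add: sum_distrib_left sum_distrib_right mult_ac)
  finally show ?thesis by (simp add: same_def sum_bob_output)
qed

lemma sym_kern_nonsignaling_A:
  "tr SX \<xi> = tr SX \<xi>' \<Longrightarrow> op_eq_on BB (ptrA_m SA (app IN sym_kern (prod_in \<xi> n \<psi>s)))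
    (ptrA_m SA (app IN sym_kern (prod_in \<xi>' n \<psi>s)))"
  by (simp add: op_eq_on_def ptrA_sym_kern_prod_in)

lemma sym_kern_nonsignaling_B:
  assumes "k < n" "tr SY (\<psi>s k) = tr SY \<phi>"
  shows "op_eq_on OUT (ptrB_m SB k (app IN sym_kern (prod_in \<xi> n \<psi>s)))
    (ptrB_m SB k (app IN sym_kern (prod_in \<xi> n (\<psi>s(k := \<phi>)))))"
proof -
  have prod_eq: "(\<Prod>j\<in>{..<n}-{k}. bob_output i ((\<psi>s(k := \<phi>)) j) (bs j)) =
      (\<Prod>j\<in>{..<n}-{k}. bob_output i (\<psi>s j) (bs j))" for i bs
    by (intro prod.cong refl) auto
  have "ptrB_m SB k (app IN sym_kern (prod_in \<xi> n \<psi>s)) (a,bs) (a',bs') =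
      ptrB_m SB k (app IN sym_kern (prod_in \<xi> n (\<psi>s(k := \<phi>)))) (a,bs) (a',bs')" for a bs a' bs'
    by (simp only: ptrB_sym_kern_prod_in[OF assms(1)] prod_eq fun_upd_same assms(2))
  then show ?thesis by (auto simp: op_eq_on_def)
qed

lemma app_R_otimes:
  assumes "a \<in> SA" "b \<in> SB" "a' \<in> SA" "b' \<in> SB"
  shows "app (SX \<times> SY) R (otimes \<xi> \<psi>) (a,b) (a',b') = (if b = b' then
    (\<Sum>i<m. complex_of_real (p i) * app SX (KA i) \<xi> a a' * bob_output i \<psi> b) else 0)"
proof -
  have "app (SX \<times> SY) R (otimes \<xi> \<psi>) (a,b) (a',b') =
      (\<Sum>i<m. complex_of_real (p i) * (app SX (KA i) \<xi> a a' * app SY (KB i) \<psi> b b'))"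
    using op_eq_onD[OF decomp, of "(a,b)" "(a',b')" "otimes \<xi> \<psi>"] assms finite_sets
    by (simp add: app_ktensor_otimes)
  then show ?thesis using assms by (cases "b = b'") (auto simp: app_KB intro!: sum.cong sum.neutral)
qed

lemma ptr_rest_sym_kern_prod_in:
  assumes "a \<in> SA" "b \<in> SB" "a' \<in> SA" "b' \<in> SB"
  shows "ptr_rest SB n (app IN sym_kern (prod_in \<xi> n \<psi>s)) (a,b) (a',b') =
    app (SX \<times> SY) R (otimes \<xi> (\<psi>s 0)) (a,b) (a',b') * (\<Prod>j\<in>{1..<n}. tr SY (\<psi>s j))"
proof -
  note R_eq = app_R_otimes[OF assms, of \<xi> "\<psi>s 0"]
  have first_fixed: "(\<Sum>bs\<in>{bs \<in> BB. bs 0 = b}. \<Prod>j<n. bob_output i (\<psi>s j) (bs j)) =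
      bob_output i (\<psi>s 0) b * (\<Prod>j\<in>{1..<n}. tr SY (\<psi>s j))" if "i < m" for i
    using that by (subst sum_prod_PiE_first_fixed[OF n_pos assms(2) finite_sets(4)]) (simp add: sum_bob_output)
  show ?thesis
  proof (cases "b = b'")
    case False
    have "app IN sym_kern (prod_in \<xi> n \<psi>s) (a,bs) (a',bs(0 := b')) = 0" if "bs 0 = b" for bs
    proof -
      have "bs \<noteq> bs(0 := b')" using that False by (metis fun_upd_same)
      then show ?thesis by (simp add: app_sym_kern_prod_in)
    qed
    then show ?thesis using False by (auto simp: ptr_rest_def R_eq intro!: sum.neutral)
  next
    case True
    have "ptr_rest SB n (app IN sym_kern (prod_in \<xi> n \<psi>s)) (a,b) (a',b) =
        (\<Sum>bs\<in>{bs \<in> BB. bs 0 = b}. \<Sum>i<m. complex_of_real (p i) * app SX (KA i) \<xi> a a' *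
          (\<Prod>j<n. bob_output i (\<psi>s j) (bs j)))"
      by (simp add: ptr_rest_diag app_sym_kern_prod_in)
    also have "\<dots> = (\<Sum>i<m. complex_of_real (p i) * app SX (KA i) \<xi> a a' *
          (\<Sum>bs\<in>{bs \<in> BB. bs 0 = b}. \<Prod>j<n. bob_output i (\<psi>s j) (bs j)))"
      by (subst sum.swap) (simp add: sum_distrib_left)
    also have "\<dots> = (\<Sum>i<m. complex_of_real (p i) * app SX (KA i) \<xi> a a' *
          (bob_output i (\<psi>s 0) b * (\<Prod>j\<in>{1..<n}. tr SY (\<psi>s j))))"
      using first_fixed by (intro sum.cong refl) simp
    finally show ?thesis unfolding R_eq using True by (simp add: sum_distrib_left sum_distrib_right mult_ac)
  qed
qed

lemma sym_kern_classical_A: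
  assumes "styp sA = TC" "a \<in> SA" "a' \<in> SA" "a \<noteq> a'"
  shows "app IN sym_kern \<rho> (a,bs) (a',bs') = 0"
proof -
  have "app SX (KA i) \<rho>' a a' = 0" if "i < m" for i \<rho>'
    using channel_A[OF that] assms unfolding channel_def by blast
  then show ?thesis by (simp add: app_sym_kern)
qed

lemma sym_kern_classical_B: "bs k \<noteq> bs' k \<Longrightarrow> app IN sym_kern \<rho> (a,bs) (a',bs') = 0"
  by (auto simp: app_sym_kern)

lemma sym_kern_classical_X:
  assumes "styp sX = TC" "x \<in> SX" "x' \<in> SX" "x \<noteq> x'"
  shows "op_eq_on OUT (app IN sym_kern (prod_in (ketbra x x') n \<psi>s)) zero_op"
proof -
  have "app SX (KA i) (ketbra x x') a a' = 0" if "i < m" "a \<in> SA" "a' \<in> SA" for i a a'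
    using channel_A[OF that(1)] assms that(2,3) unfolding channel_def op_eq_on_def zero_op_def by blast
  then show ?thesis
    by (auto simp: op_eq_on_def zero_op_def mlabels_def[of SA n SB] app_sym_kern_prod_in intro!: sum.neutral)
qed

lemma sym_kern_classical_Y:
  assumes "k < n" "y \<in> SY" "y' \<in> SY" "y \<noteq> y'"
  shows "op_eq_on OUT (app IN sym_kern (prod_in \<xi> n (\<psi>s(k := ketbra y y')))) zero_op"
proof -
  have "bob_output i (ketbra y y') b = 0" for i b
    unfolding bob_output_def ketbra_def using assms by (intro sum.neutral) auto
  then have "(\<Prod>j<n. bob_output i ((\<psi>s(k := ketbra y y')) j) (bs j)) = 0" for i bs
    using assms(1) by (intro prod_zero) (auto intro!: bexI[of _ k])
  then show ?thesis
    by (simp add: op_eq_on_def zero_op_def mlabels_def[of SA n SB] app_sym_kern_prod_in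
      del: fun_upd_apply prod_zero_iff)
qed

lemma sym_kern_permute:
  assumes \<pi>: "\<pi> permutes {..<n}"
  shows "app IN sym_kern (perm_op \<pi> \<rho>) (a,bs) (a',bs') = perm_op \<pi> (app IN sym_kern \<rho>) (a,bs) (a',bs')"
proof -
  define F where "F i ys = app SX (KA i) (\<lambda>x x'. \<rho> (x,ys) (x',ys)) a a'" for i ys
  have "perm_op \<pi> (app IN sym_kern \<rho>) (a,bs) (a',bs') = (if bs = bs' then
      (\<Sum>i<m. \<Sum>ys\<in>YY. complex_of_real (p i * copies_prob i (bs \<circ> \<pi>) ys) * F i ys) else 0)"
    by (simp add: perm_op_def app_sym_kern F_def comp_permutes_eq_iff[OF \<pi>])
  also have "\<dots> = (if bs = bs' then
      (\<Sum>i<m. \<Sum>ys\<in>YY. complex_of_real (p i * copies_prob i (bs \<circ> \<pi>) (ys \<circ> \<pi>)) * F i (ys \<circ> \<pi>)) else 0)"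
  proof -
    have "(\<Sum>ys\<in>YY. complex_of_real (p i * copies_prob i (bs \<circ> \<pi>) ys) * F i ys) =
        (\<Sum>ys\<in>YY. complex_of_real (p i * copies_prob i (bs \<circ> \<pi>) (ys \<circ> \<pi>)) * F i (ys \<circ> \<pi>))" for i bs
      by (rule sum.reindex_bij_betw[OF bij_betw_comp_permutes_PiE[OF \<pi>], symmetric])
    then show ?thesis by simp
  qed
  also have "\<dots> = app IN sym_kern (perm_op \<pi> \<rho>) (a,bs) (a',bs')"
    by (simp add: app_sym_kern F_def perm_op_def copies_prob_permute[OF \<pi>])
  finally show ?thesis ..
qed

lemma CP_sym_kern: "CP IN OUT sym_kern"
  unfolding CP_def
proof (intro allI impI)
  fix k :: nat and \<sigma> :: "(nat \<times> (nat \<times> (nat \<Rightarrow> nat))) op"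
  assume \<sigma>: "psd ({..<k} \<times> IN) \<sigma>"
  \<comment> \<open>decompose the output into blocks, one per hidden variable \<open>i\<close>, input \<open>ys\<close> and output \<open>bs\<close>\<close>
  define \<sigma>y where "\<sigma>y ys = (\<lambda>(c,x) (c',x'). \<sigma> (c,(x,ys)) (c',(x',ys)))" for ys
  define Out where "Out i ys = (\<lambda>(c,a) (c',a'). \<Sum>x\<in>SX. \<Sum>x'\<in>SX. KA i a a' x x' * \<sigma>y ys (c,x) (c',x'))" for i ys
  define N where "N i ys bs = (\<lambda>(c,(a,bs1)) (c',(a',bs2)).
      if bs1 = bs \<and> bs2 = bs then Out i ys (c,a) (c',a') else 0)" for i ys and bs :: "nat \<Rightarrow> nat"
  have fin: "finite ({..<k} \<times> (SX \<times> YY))" "finite ({..<k} \<times> (SA \<times> BB))"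
    using finite_sets by simp_all
  have "psd ({..<k} \<times> SX) (\<sigma>y ys)" if "ys \<in> YY" for ys
    unfolding \<sigma>y_def using \<sigma> fin(1) that unfolding mlabels_def by (rule psd_block_restrict)
  then have psd_Out: "psd ({..<k} \<times> SA) (Out i ys)" if "i < m" "ys \<in> YY" for i ys
    using that channel_A[OF that(1)] unfolding channel_def CP_def Out_def by blast
  have psd_N: "psd ({..<k} \<times> OUT) (N i ys bs)" if "i < m" "ys \<in> YY" "bs \<in> BB" for i ys bs
    unfolding N_def mlabels_def using psd_Out[OF that(1,2)] fin(2) that(3) by (rule psd_block_embed)
  have psd_blocks: "psd ({..<k} \<times> OUT) (\<lambda>u v. \<Sum>i<m. \<Sum>ys\<in>YY. \<Sum>bs\<in>BB.
      complex_of_real (p i * copies_prob i bs ys) * N i ys bs u v)"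
    by (intro psd_sum psd_scale psd_N finite_sets)
      (auto simp: less_eq_complex_def p_nonneg copies_prob_nonneg)
  have sum_blocks: "(\<Sum>i<m. \<Sum>ys\<in>YY. \<Sum>bs\<in>BB. complex_of_real (p i * copies_prob i bs ys) *
      N i ys bs (c,(a,bs1)) (c',(a',bs2))) = app IN sym_kern (\<lambda>q q'. \<sigma> (c,q) (c',q')) (a,bs1) (a',bs2)"
    if "bs1 \<in> BB" for c a bs1 c' a' bs2
  proof -
    have "(\<Sum>bs\<in>BB. complex_of_real (p i * copies_prob i bs ys) * N i ys bs (c,(a,bs1)) (c',(a',bs2))) =
        (if bs1 = bs2 then complex_of_real (p i * copies_prob i bs1 ys) * Out i ys (c,a) (c',a') else 0)"
      for i ys
      using that finite_sets(6) by (simp add: N_def sum_mult_delta_pair)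
    moreover have "Out i ys (c,a) (c',a') = app SX (KA i) (\<lambda>x x'. \<sigma> (c,(x,ys)) (c',(x',ys))) a a'" for i ys
      by (simp add: Out_def \<sigma>y_def app_def)
    ultimately show ?thesis by (cases "bs1 = bs2") (simp_all add: app_sym_kern del: of_real_mult)
  qed
  show "psd ({..<k} \<times> OUT)
      (\<lambda>(c,u) (c',u'). \<Sum>i\<in>IN. \<Sum>i'\<in>IN. sym_kern u u' i i' * \<sigma> (c,i) (c',i'))"
  proof (rule psd_cong[OF _ psd_blocks], unfold op_eq_on_def, intro ballI)
    fix s s' assume "s \<in> {..<k} \<times> OUT" "s' \<in> {..<k} \<times> OUT"
    then obtain c a bs1 c' a' bs2 where "s = (c,(a,bs1))" "s' = (c',(a',bs2))" "bs1 \<in> BB"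
      by (auto simp: mlabels_def)
    then show "(\<Sum>i<m. \<Sum>ys\<in>YY. \<Sum>bs\<in>BB. complex_of_real (p i * copies_prob i bs ys) * N i ys bs s s') =
        (\<lambda>(c,u) (c',u'). \<Sum>i\<in>IN. \<Sum>i'\<in>IN. sym_kern u u' i i' * \<sigma> (c,i) (c',i')) s s'"
      using sum_blocks by (simp add: app_def)
  qed
qed

lemma sym_ext_sym_kern: "sym_ext sX sY sA sB n R sym_kern"
  unfolding sym_ext_def Let_def
proof (intro conjI allI impI ballI)
  show "CP IN OUT sym_kern" by (rule CP_sym_kern)
next
  show "tr OUT (app IN sym_kern (prod_in \<xi> n \<psi>s)) = tr SX \<xi> * (\<Prod>j<n. tr SY (\<psi>s j))" for \<xi> \<psi>s
    by (rule tr_sym_kern_prod_in)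
next
  fix \<xi> \<xi>' \<psi>s assume "density SX \<xi> \<and> density SX \<xi>' \<and> (\<forall>j<n. density SY (\<psi>s j))"
  then show "op_eq_on BB (ptrA_m SA (app IN sym_kern (prod_in \<xi> n \<psi>s)))
      (ptrA_m SA (app IN sym_kern (prod_in \<xi>' n \<psi>s)))"
    by (intro sym_kern_nonsignaling_A) (simp add: density_def)
next
  fix k \<xi> \<psi>s \<phi> assume "k < n" "density SX \<xi> \<and> (\<forall>j<n. density SY (\<psi>s j)) \<and> density SY \<phi>"
  then show "op_eq_on OUT (ptrB_m SB k (app IN sym_kern (prod_in \<xi> n \<psi>s)))
      (ptrB_m SB k (app IN sym_kern (prod_in \<xi> n (\<psi>s(k := \<phi>)))))"
    by (intro sym_kern_nonsignaling_B) (simp_all add: density_def)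
next
  fix \<rho> a bs a' bs' assume "styp sA = TC" "(a,bs) \<in> OUT \<and> (a',bs') \<in> OUT \<and> a \<noteq> a'"
  then show "app IN sym_kern \<rho> (a,bs) (a',bs') = 0" by (intro sym_kern_classical_A) (auto simp: mlabels_def)
next
  fix k \<rho> a bs a' bs' assume "(a,bs) \<in> OUT \<and> (a',bs') \<in> OUT \<and> bs k \<noteq> bs' k"
  then show "app IN sym_kern \<rho> (a,bs) (a',bs') = 0" by (intro sym_kern_classical_B[of bs k]) auto
next
  fix x x' \<psi>s assume "styp sX = TC" "x \<in> SX" "x' \<in> SX" "x \<noteq> x'"
  then show "op_eq_on OUT (app IN sym_kern (prod_in (ketbra x x') n \<psi>s)) zero_op"
    by (rule sym_kern_classical_X)
next
  fix k y y' \<xi> \<psi>s assume "k < n" "y \<in> SY" "y' \<in> SY" "y \<noteq> y'"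
  then show "op_eq_on OUT (app IN sym_kern (prod_in \<xi> n (\<psi>s(k := ketbra y y')))) zero_op"
    by (rule sym_kern_classical_Y)
next
  fix \<pi> \<rho> assume "\<pi> permutes {..<n}"
  then show "op_eq_on OUT (app IN sym_kern (perm_op \<pi> \<rho>)) (perm_op \<pi> (app IN sym_kern \<rho>))"
    by (auto simp: op_eq_on_def sym_kern_permute)
next
  fix \<xi> \<psi>s
  show "op_eq_on (SA \<times> SB) (ptr_rest SB n (app IN sym_kern (prod_in \<xi> n \<psi>s)))
      (\<lambda>u u'. app (SX \<times> SY) R (otimes \<xi> (\<psi>s 0)) u u' * (\<Prod>j\<in>{1..<n}. tr SY (\<psi>s j)))"
    by (auto simp: op_eq_on_def ptr_rest_sym_kern_prod_in)
qed

end

lemma LOSR_free_imp_sym_ext: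
  assumes "resource sX sY sA sB R" "styp sY = TC" "styp sB = TC" "LOSR_free sX sY sA sB R"
  shows "\<exists>E. sym_ext sX sY sA sB (sdim sY) R E"
proof -
  have "0 < sdim sY" using assms(1) by (simp add: resource_def Let_def valid_sys_def)
  then obtain m p KA KB where "LOSR_model sX sY sA sB (sdim sY) R m p KA KB"
    using assms(2-4) unfolding LOSR_free_def LOSR_model_def by blast
  then show ?thesis using LOSR_model.sym_ext_sym_kern by blast
qed

section \<open>A symmetric extension yields an LOSR decomposition\<close>

locale sym_extension = extension_labels sX sY sA sB "sdim sY"
  for sX sY sA sB :: system +
  fixes R :: "(nat \<times> nat, nat \<times> nat) kern"
    and E :: "(nat \<times> (nat \<Rightarrow> nat), nat \<times> (nat \<Rightarrow> nat)) kern"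
  assumes res: "resource sX sY sA sB R" and classical_Y: "styp sY = TC" and classical_B: "styp sB = TC"
    and ext: "sym_ext sX sY sA sB (sdim sY) R E"
begin

abbreviation "n \<equiv> sdim sY"
abbreviation "EE \<equiv> app IN E"

lemma valid_systems: "valid_sys sX" "valid_sys sY" "valid_sys sA" "valid_sys sB"
  using res by (simp_all add: resource_def Let_def)

lemma SY_eq: "SY = {..<n}"
  by (simp add: labels_def)

lemma n_pos: "0 < n"
  using valid_systems(2) by (simp add: valid_sys_def)

lemma zero_in_SX: "0 \<in> SX"
  using valid_systems(1) by (simp add: valid_sys_def labels_def)

lemmas ext_props = ext[unfolded sym_ext_def Let_def]
lemmas res_props = res[unfolded resource_def Let_def]

lemma CP_E: "CP IN OUT E"
  using ext_props by (elim conjE) assumption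

lemma tr_E [rule_format]: "\<forall>\<xi> \<psi>s. tr OUT (EE (prod_in \<xi> n \<psi>s)) = tr SX \<xi> * (\<Prod>j<n. tr SY (\<psi>s j))"
  using ext_props by (elim conjE) assumption

lemma E_nonsignaling_A [rule_format]:
  "\<forall>\<xi> \<xi>' \<psi>s. density SX \<xi> \<and> density SX \<xi>' \<and> (\<forall>j<n. density SY (\<psi>s j)) \<longrightarrow>
    op_eq_on BB (ptrA_m SA (EE (prod_in \<xi> n \<psi>s))) (ptrA_m SA (EE (prod_in \<xi>' n \<psi>s)))"
  using ext_props by (elim conjE) assumption

lemma E_classical_A [rule_format]:
  "styp sA = TC \<longrightarrow> (\<forall>\<rho> a bs a' bs'. (a,bs) \<in> OUT \<and> (a',bs') \<in> OUT \<and> a \<noteq> a' \<longrightarrow>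
    EE \<rho> (a,bs) (a',bs') = 0)"
  using ext_props by (elim conjE) assumption

lemma E_classical_X [rule_format]:
  "styp sX = TC \<longrightarrow> (\<forall>x\<in>SX. \<forall>x'\<in>SX. \<forall>\<psi>s. x \<noteq> x' \<longrightarrow>
    op_eq_on OUT (EE (prod_in (ketbra x x') n \<psi>s)) zero_op)"
  using ext_props by (elim conjE) assumption

lemma E_permute [rule_format]:
  "\<forall>\<pi>. \<pi> permutes {..<n} \<longrightarrow> (\<forall>\<rho>. op_eq_on OUT (EE (perm_op \<pi> \<rho>)) (perm_op \<pi> (EE \<rho>)))"
  using ext_props by (elim conjE) assumption

lemma E_reduction [rule_format]:
  "\<forall>\<xi> \<psi>s. op_eq_on (SA \<times> SB) (ptr_rest SB n (EE (prod_in \<xi> n \<psi>s)))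
    (\<lambda>u u'. app (SX \<times> SY) R (otimes \<xi> (\<psi>s 0)) u u' * (\<Prod>j\<in>{1..<n}. tr SY (\<psi>s j)))"
  using ext_props by (elim conjE) assumption

lemma R_classical_B [rule_format]:
  "styp sB = TC \<longrightarrow> (\<forall>\<rho> a a' b b'. a \<in> SA \<and> a' \<in> SA \<and> b \<in> SB \<and> b' \<in> SB \<and> b \<noteq> b' \<longrightarrow>
    app (SX \<times> SY) R \<rho> (a,b) (a',b') = 0)"
  using res_props by (elim conjE) assumption

lemma R_classical_Y [rule_format]:
  "styp sY = TC \<longrightarrow> (\<forall>y\<in>SY. \<forall>y'\<in>SY. \<forall>\<xi>. y \<noteq> y' \<longrightarrow>
    op_eq_on (SA \<times> SB) (app (SX \<times> SY) R (otimes \<xi> (ketbra y y'))) zero_op)"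
  using res_props by (elim conjE) assumption

text \<open>Copy \<open>j\<close> of Bob receives input \<open>j\<close>: as \<open>n = d[Y]\<close>, all inputs are queried at once.\<close>

definition inputs_id :: "nat \<Rightarrow> nat" where
  "inputs_id = (\<lambda>j. if j < n then j else undefined)"

lemma inputs_id_in: "inputs_id \<in> YY"
  by (auto simp: inputs_id_def PiE_iff labels_def extensional_def)

lemma prod_in_inputs_id:
  assumes "ys \<in> YY" "ys' \<in> YY"
  shows "prod_in \<xi> n (\<lambda>j. ketbra j j) (x,ys) (x',ys') = (if ys = inputs_id \<and> ys' = inputs_id then \<xi> x x' else 0)"
proof -
  have "ys = inputs_id \<longleftrightarrow> (\<forall>j<n. ys j = j)" if "ys \<in> YY" for ys
    using that by (auto simp: inputs_id_def PiE_iff extensional_def fun_eq_iff)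
  then have "(\<Prod>j<n. ketbra j j (ys j) (ys' j)) = (if ys = inputs_id \<and> ys' = inputs_id then 1 else 0)"
    using assms by (auto simp: ketbra_def intro: prod_zero)
  then show ?thesis by (simp add: prod_in_def)
qed

lemma sum_IN_inputs_id:
  assumes "\<And>x ys x' ys'. x \<in> SX \<Longrightarrow> ys \<in> YY \<Longrightarrow> x' \<in> SX \<Longrightarrow> ys' \<in> YY \<Longrightarrow>
    ys \<noteq> inputs_id \<or> ys' \<noteq> inputs_id \<Longrightarrow> G (x,ys) (x',ys') = 0"
  shows "(\<Sum>q\<in>IN. \<Sum>q'\<in>IN. G q q') = (\<Sum>x\<in>SX. \<Sum>x'\<in>SX. G (x,inputs_id) (x',inputs_id))"
proof -
  have fin: "finite (SX \<times> YY)" using finite_sets by simp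
  have emb: "inj_on (\<lambda>x. (x,inputs_id)) SX" "(\<lambda>x. (x,inputs_id)) ` SX \<subseteq> SX \<times> YY"
    using inputs_id_in by (auto simp: inj_on_def)
  have "(\<Sum>q\<in>IN. \<Sum>q'\<in>IN. G q q') = (\<Sum>x\<in>SX. \<Sum>q'\<in>SX \<times> YY. G (x,inputs_id) q')"
    unfolding mlabels_def using fin emb assms
    by (intro sum_reindex_support) (auto simp: image_iff intro!: sum.neutral)
  also have "\<dots> = (\<Sum>x\<in>SX. \<Sum>x'\<in>SX. G (x,inputs_id) (x',inputs_id))"
    using fin emb assms inputs_id_in by (intro sum.cong refl sum_reindex_support) (auto simp: image_iff)
  finally show ?thesis .
qed

definition cond_state :: "(nat \<Rightarrow> nat) \<Rightarrow> nat op \<Rightarrow> nat op" where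
  "cond_state bs \<xi> = (\<lambda>a a'. \<Sum>x\<in>SX. \<Sum>x'\<in>SX. E (a,bs) (a',bs) (x,inputs_id) (x',inputs_id) * \<xi> x x')"

lemma cond_state_eq_app_E: "cond_state bs \<xi> a a' = EE (prod_in \<xi> n (\<lambda>j. ketbra j j)) (a,bs) (a',bs)"
  unfolding app_def cond_state_def
  by (subst sum_IN_inputs_id) (auto simp: prod_in_inputs_id inputs_id_in)

lemma cond_state_ketbra:
  "x \<in> SX \<Longrightarrow> x' \<in> SX \<Longrightarrow> cond_state bs (ketbra x x') a a' = E (a,bs) (a',bs) (x,inputs_id) (x',inputs_id)"
  using finite_sets by (simp add: cond_state_def ketbra_def if_distrib sum_sum_delta cong: if_cong)

lemma psd_cond_state:
  assumes "bs \<in> BB" "psd SX \<xi>"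
  shows "psd SA (cond_state bs \<xi>)"
proof -
  have "psd IN (prod_in \<xi> n (\<lambda>j. ketbra j j))"
    by (rule psd_extend_by_zero[OF assms(2), where f="\<lambda>x. (x,inputs_id)"])
      (use finite_sets inputs_id_in in \<open>auto simp: mlabels_def inj_on_def prod_in_inputs_id\<close>)
  then have "psd OUT (EE (prod_in \<xi> n (\<lambda>j. ketbra j j)))"
    using CP_E finite_sets by (intro CP_imp_psd_app) (simp_all add: mlabels_def)
  from psd_reindex[OF this, of "\<lambda>a. (a,bs)" SA]
  have "psd SA (\<lambda>a a'. EE (prod_in \<xi> n (\<lambda>j. ketbra j j)) (a,bs) (a',bs))"
    using assms(1) finite_sets by (auto simp: inj_on_def mlabels_def)
  then show ?thesis by (simp add: cond_state_eq_app_E[abs_def])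
qed

lemma density_inputs: "\<forall>j<n. density SY (ketbra j j)"
  using finite_sets by (auto simp: SY_eq intro!: density_ketbra)

lemma density_ketbra_0: "density SX (ketbra 0 0)"
  using density_ketbra[OF finite_sets(1) zero_in_SX] .

lemma tr_cond_state_indep:
  assumes "bs \<in> BB" "density SX \<xi>"
  shows "tr SA (cond_state bs \<xi>) = tr SA (cond_state bs (ketbra 0 0))"
proof -
  have "op_eq_on BB (ptrA_m SA (EE (prod_in \<xi> n (\<lambda>j. ketbra j j))))
      (ptrA_m SA (EE (prod_in (ketbra 0 0) n (\<lambda>j. ketbra j j))))"
    using assms(2) density_ketbra_0 density_inputs by (intro E_nonsignaling_A) auto
  then show ?thesis
    using assms(1) by (simp add: op_eq_on_def ptrA_m_def tr_def cond_state_eq_app_E)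
qed

lemma tr_cond_state_nonneg: "bs \<in> BB \<Longrightarrow> 0 \<le> tr SA (cond_state bs (ketbra 0 0))"
  unfolding tr_def using psd_cond_state[OF _ psd_ketbra] finite_sets
  by (intro sum_nonneg psd_diag_nonneg) auto

definition out_prob :: "(nat \<Rightarrow> nat) \<Rightarrow> real" where
  "out_prob bs = Re (tr SA (cond_state bs (ketbra 0 0)))"

lemma out_prob_nonneg: "bs \<in> BB \<Longrightarrow> 0 \<le> out_prob bs"
  using tr_cond_state_nonneg by (simp add: out_prob_def less_eq_complex_def)

lemma tr_cond_state:
  assumes "bs \<in> BB" "density SX \<xi>"
  shows "tr SA (cond_state bs \<xi>) = complex_of_real (out_prob bs)"
  using tr_cond_state_indep[OF assms] tr_cond_state_nonneg[OF assms(1)]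
  by (simp add: out_prob_def less_eq_complex_def complex_eq_iff)

lemma sum_out_prob: "(\<Sum>bs\<in>BB. out_prob bs) = 1"
proof -
  have "(\<Sum>bs\<in>BB. complex_of_real (out_prob bs)) = (\<Sum>bs\<in>BB. tr SA (cond_state bs (ketbra 0 0)))"
    using tr_cond_state density_ketbra_0 by simp
  also have "\<dots> = (\<Sum>a\<in>SA. \<Sum>bs\<in>BB. EE (prod_in (ketbra 0 0) n (\<lambda>j. ketbra j j)) (a,bs) (a,bs))"
    by (subst sum.swap) (simp add: tr_def cond_state_eq_app_E)
  also have "\<dots> = tr OUT (EE (prod_in (ketbra 0 0) n (\<lambda>j. ketbra j j)))"
    by (simp add: tr_def mlabels_def[of SA n SB] sum_Times_iterated)
  also have "\<dots> = 1"
    using tr_E density_inputs density_ketbra_0 by (simp add: density_def)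
  finally show ?thesis by (metis of_real_eq_1_iff of_real_sum)
qed

lemma tr_cond_state_as_functional:
  "tr SA (cond_state bs \<xi>) =
    (\<Sum>x\<in>SX. \<Sum>x'\<in>SX. (\<Sum>a\<in>SA. E (a,bs) (a,bs) (x,inputs_id) (x',inputs_id)) * \<xi> x x')"
proof -
  have "tr SA (cond_state bs \<xi>) =
      (\<Sum>a\<in>SA. \<Sum>x\<in>SX. \<Sum>x'\<in>SX. E (a,bs) (a,bs) (x,inputs_id) (x',inputs_id) * \<xi> x x')"
    by (simp add: tr_def cond_state_def)
  also have "\<dots> = (\<Sum>x\<in>SX. \<Sum>x'\<in>SX. \<Sum>a\<in>SA. E (a,bs) (a,bs) (x,inputs_id) (x',inputs_id) * \<xi> x x')"
    by (subst sum.swap, subst (2) sum.swap) (rule refl)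
  finally show ?thesis by (simp add: sum_distrib_right)
qed

lemma cond_state_trace_kern:
  assumes "bs \<in> BB" "x \<in> SX" "x' \<in> SX"
  shows "(\<Sum>a\<in>SA. E (a,bs) (a,bs) (x,inputs_id) (x',inputs_id)) =
    (if x = x' then complex_of_real (out_prob bs) else 0)"
proof -
  note const = tr_cond_state[OF assms(1), unfolded tr_cond_state_as_functional]
  show ?thesis
    using density_functional_diag[OF finite_sets(1) const] density_functional_offdiag[OF finite_sets(1) const]
      assms(2,3) by auto
qed

lemma cond_state_vanishes:
  assumes "bs \<in> BB" "out_prob bs = 0" "a \<in> SA" "a' \<in> SA" "x \<in> SX" "x' \<in> SX"
  shows "E (a,bs) (a',bs) (x,inputs_id) (x',inputs_id) = 0"
proof -
  have const: "(\<Sum>z\<in>SX. \<Sum>z'\<in>SX. E (a,bs) (a',bs) (z,inputs_id) (z',inputs_id) * \<xi> z z') = 0"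
    if "density SX \<xi>" for \<xi>
  proof -
    have "tr SA (cond_state bs \<xi>) = 0" using tr_cond_state[OF assms(1) that] assms(2) by simp
    then have "cond_state bs \<xi> a a' = 0"
      using psd_trace_zero[OF psd_cond_state[OF assms(1)] finite_sets(3)] that assms(3,4)
      by (simp add: density_def)
    then show ?thesis by (simp add: cond_state_def)
  qed
  show ?thesis
    using density_functional_diag[OF finite_sets(1) const] density_functional_offdiag[OF finite_sets(1) const]
      assms(5,6) by (cases "x = x'") auto
qed

definition cond_kern :: "(nat \<Rightarrow> nat) \<Rightarrow> (nat,nat) kern" where
  "cond_kern bs = (\<lambda>a a' x x'. E (a,bs) (a',bs) (x,inputs_id) (x',inputs_id) / complex_of_real (out_prob bs))"

lemma CP_cond_kern:
  assumes bs: "bs \<in> BB" and pos: "0 < out_prob bs"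
  shows "CP SX SA (cond_kern bs)"
  unfolding CP_def
proof (intro allI impI)
  fix k :: nat and \<sigma> :: "(nat \<times> nat) op"
  assume \<sigma>: "psd ({..<k} \<times> SX) \<sigma>"
  \<comment> \<open>feed \<open>\<sigma>\<close> to \<open>E\<close> with Bob's inputs \<open>inputs_id\<close> and read off the block of outputs \<open>bs\<close>\<close>
  define \<sigma>' where "\<sigma>' = (\<lambda>(c,(x,ys)) (c',(x',ys')).
    if ys = inputs_id \<and> ys' = inputs_id then \<sigma> (c,x) (c',x') else 0)"
  define out where "out = (\<lambda>(c,u) (c',u'). \<Sum>q\<in>IN. \<Sum>q'\<in>IN. E u u' q q' * \<sigma>' (c,q) (c',q'))"
  have fin: "finite ({..<k} \<times> (SX \<times> YY))" "finite ({..<k} \<times> (SA \<times> BB))"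
    using finite_sets by simp_all
  have "psd ({..<k} \<times> IN) \<sigma>'"
    unfolding \<sigma>'_def mlabels_def using \<sigma> fin(1) inputs_id_in by (rule psd_block_embed)
  then have "psd ({..<k} \<times> OUT) out" using CP_E unfolding CP_def out_def by blast
  then have "psd ({..<k} \<times> SA) (\<lambda>(c,a) (c',a'). out (c,(a,bs)) (c',(a',bs)))"
    unfolding mlabels_def using fin(2) bs by (rule psd_block_restrict)
  then have psd_block: "psd ({..<k} \<times> SA) (\<lambda>s s'. complex_of_real (1 / out_prob bs) *
      (\<lambda>(c,a) (c',a'). out (c,(a,bs)) (c',(a',bs))) s s')"
    using pos by (intro psd_scale) (simp_all add: less_eq_complex_def)
  have block_eq: "complex_of_real (1 / out_prob bs) * out (c,(a,bs)) (c',(a',bs)) =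
      (\<Sum>x\<in>SX. \<Sum>x'\<in>SX. cond_kern bs a a' x x' * \<sigma> (c,x) (c',x'))" for c a c' a'
  proof -
    have "out (c,(a,bs)) (c',(a',bs)) =
        (\<Sum>x\<in>SX. \<Sum>x'\<in>SX. E (a,bs) (a',bs) (x,inputs_id) (x',inputs_id) * \<sigma> (c,x) (c',x'))"
      unfolding out_def by (subst sum_IN_inputs_id) (auto simp: \<sigma>'_def)
    then show ?thesis by (simp add: cond_kern_def sum_distrib_left divide_inverse mult_ac)
  qed
  show "psd ({..<k} \<times> SA)
      (\<lambda>(c,a) (c',a'). \<Sum>x\<in>SX. \<Sum>x'\<in>SX. cond_kern bs a a' x x' * \<sigma> (c,x) (c',x'))"
  proof (rule psd_cong[OF _ psd_block], unfold op_eq_on_def, intro ballI)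
    fix s s' :: "nat \<times> nat"
    obtain c a c' a' where "s = (c,a)" "s' = (c',a')" by (cases s; cases s')
    then show "complex_of_real (1 / out_prob bs) * (\<lambda>(c,a) (c',a'). out (c,(a,bs)) (c',(a',bs))) s s' =
        (\<lambda>(c,a) (c',a'). \<Sum>x\<in>SX. \<Sum>x'\<in>SX. cond_kern bs a a' x x' * \<sigma> (c,x) (c',x')) s s'"
      using block_eq by simp
  qed
qed

lemma channel_cond_kern:
  assumes bs: "bs \<in> BB" and pos: "0 < out_prob bs"
  shows "channel sX sA (cond_kern bs)"
  unfolding channel_def
proof (intro conjI allI impI ballI)
  show "CP SX SA (cond_kern bs)" by (rule CP_cond_kern[OF assms])
next
  fix \<xi>
  have "tr SA (cond_state bs \<xi>) = (\<Sum>x\<in>SX. \<Sum>x'\<in>SX. if x' = x then complex_of_real (out_prob bs) * \<xi> x x' else 0)"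
    unfolding tr_cond_state_as_functional using cond_state_trace_kern[OF bs] by (intro sum.cong refl) auto
  also have "\<dots> = complex_of_real (out_prob bs) * tr SX \<xi>"
    using finite_sets by (simp add: tr_def sum_distrib_left)
  finally have "tr SA (cond_state bs \<xi>) = complex_of_real (out_prob bs) * tr SX \<xi>" .
  moreover have "tr SA (app SX (cond_kern bs) \<xi>) = tr SA (cond_state bs \<xi>) / complex_of_real (out_prob bs)"
    by (simp add: tr_def app_def cond_kern_def cond_state_def sum_divide_distrib)
  ultimately show "tr SA (app SX (cond_kern bs) \<xi>) = tr SX \<xi>" using pos by simp
next
  fix \<rho> a a' assume a: "styp sA = TC" "a \<in> SA" "a' \<in> SA" "a \<noteq> a'"
  have "E (a,bs) (a',bs) (x,inputs_id) (x',inputs_id) = 0" if "x \<in> SX" "x' \<in> SX" for x x'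
  proof -
    have "EE (ketbra (x,inputs_id) (x',inputs_id)) (a,bs) (a',bs) = 0"
      using E_classical_A a bs by (simp add: mlabels_def)
    then show ?thesis using that finite_sets inputs_id_in by (simp add: mlabels_def app_ketbra)
  qed
  then show "app SX (cond_kern bs) \<rho> a a' = 0" by (simp add: app_def cond_kern_def)
next
  fix x x' assume x: "styp sX = TC" "x \<in> SX" "x' \<in> SX" "x \<noteq> x'"
  have "cond_state bs (ketbra x x') a a' = 0" if "a \<in> SA" "a' \<in> SA" for a a'
    using op_eq_onD[OF E_classical_X[OF x], of "(a,bs)" "(a',bs)"] that bs
    by (simp add: cond_state_eq_app_E mlabels_def zero_op_def)
  then show "op_eq_on SA (app SX (cond_kern bs) (ketbra x x')) zero_op"
    using finite_sets \<open>x \<in> SX\<close> \<open>x' \<in> SX\<close>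
    by (simp add: op_eq_on_def zero_op_def app_ketbra cond_kern_def cond_state_ketbra)
qed (use valid_systems in auto)

definition bs_pos :: "nat \<Rightarrow> nat" where
  "bs_pos = (SOME bs. bs \<in> BB \<and> 0 < out_prob bs)"

lemma bs_pos: "bs_pos \<in> BB \<and> 0 < out_prob bs_pos"
proof -
  have "\<exists>bs\<in>BB. 0 < out_prob bs"
    using sum_out_prob sum_nonpos[of BB out_prob] by force
  then show ?thesis unfolding bs_pos_def by (metis (mono_tags, lifting) someI_ex)
qed

text \<open>An output string of probability zero may be given any channel; we reuse one of positive probability.\<close>

definition alice_kern :: "(nat \<Rightarrow> nat) \<Rightarrow> (nat,nat) kern" where
  "alice_kern bs = (if 0 < out_prob bs then cond_kern bs else cond_kern bs_pos)"

lemma channel_alice_kern: "bs \<in> BB \<Longrightarrow> channel sX sA (alice_kern bs)"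
  using channel_cond_kern bs_pos by (simp add: alice_kern_def)

lemma out_prob_alice_kern:
  assumes "bs \<in> BB" "a \<in> SA" "a' \<in> SA" "x \<in> SX" "x' \<in> SX"
  shows "complex_of_real (out_prob bs) * alice_kern bs a a' x x' = E (a,bs) (a',bs) (x,inputs_id) (x',inputs_id)"
  using assms cond_state_vanishes[OF assms(1) _ assms(2-5)] out_prob_nonneg[OF assms(1)]
  by (cases "0 < out_prob bs") (simp_all add: alice_kern_def cond_kern_def)

lemma channel_bob: "bs \<in> BB \<Longrightarrow> channel sY sB (det_kern bs)"
  using valid_systems(2,4) by (intro channel_det_kern) (auto simp: PiE_iff SY_eq)

lemma ptr_rest_permute:
  assumes \<pi>: "\<pi> permutes {..<n}" and a: "a \<in> SA" "a' \<in> SA"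
  shows "ptr_rest SB n (EE (perm_op \<pi> \<rho>)) (a,b) (a',b) =
    (\<Sum>cs\<in>BB. if cs (inv \<pi> 0) = b then EE \<rho> (a,cs) (a',cs) else 0)"
proof -
  have "ptr_rest SB n (EE (perm_op \<pi> \<rho>)) (a,b) (a',b) =
      (\<Sum>bs\<in>BB. if bs 0 = b then EE (perm_op \<pi> \<rho>) (a,bs) (a',bs) else 0)"
    using finite_sets by (simp add: ptr_rest_diag sum.inter_filter)
  also have "\<dots> = (\<Sum>bs\<in>BB. if (bs \<circ> \<pi>) (inv \<pi> 0) = b then EE \<rho> (a, bs \<circ> \<pi>) (a', bs \<circ> \<pi>) else 0)"
  proof (intro sum.cong refl)
    fix bs assume "bs \<in> BB"
    then have "EE (perm_op \<pi> \<rho>) (a,bs) (a',bs) = EE \<rho> (a, bs \<circ> \<pi>) (a', bs \<circ> \<pi>)"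
      using op_eq_onD[OF E_permute[OF \<pi>], of "(a,bs)" "(a',bs)"] a by (simp add: mlabels_def perm_op_def)
    moreover have "(bs \<circ> \<pi>) (inv \<pi> 0) = bs 0" using permutes_inverses(1)[OF \<pi>] by simp
    ultimately show "(if bs 0 = b then EE (perm_op \<pi> \<rho>) (a,bs) (a',bs) else 0) =
        (if (bs \<circ> \<pi>) (inv \<pi> 0) = b then EE \<rho> (a, bs \<circ> \<pi>) (a', bs \<circ> \<pi>) else 0)" by simp
  qed
  also have "\<dots> = (\<Sum>cs\<in>BB. if cs (inv \<pi> 0) = b then EE \<rho> (a,cs) (a',cs) else 0)"
    by (rule sum.reindex_bij_betw[OF bij_betw_comp_permutes_PiE[OF \<pi>]])
  finally show ?thesis .
qed

lemma R_kern_diag: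
  assumes a: "a \<in> SA" "a' \<in> SA" and b: "b \<in> SB" and x: "x \<in> SX" "x' \<in> SX" and y: "y \<in> SY"
  shows "R (a,b) (a',b) (x,y) (x',y) =
    (\<Sum>bs\<in>BB. if bs y = b then E (a,bs) (a',bs) (x,inputs_id) (x',inputs_id) else 0)"
proof -
  \<comment> \<open>by symmetry, copy \<open>0\<close> may be given input \<open>y\<close> and copy \<open>y\<close> input \<open>0\<close>\<close>
  define \<pi> where "\<pi> = Transposition.transpose 0 y"
  have \<pi>: "\<pi> permutes {..<n}" using n_pos y unfolding \<pi>_def SY_eq by (intro permutes_swap_id) auto
  have inv_\<pi>_0: "inv \<pi> 0 = y" using permutes_inv_eq[OF \<pi>] by (simp add: \<pi>_def)
  define \<psi>s where "\<psi>s = (\<lambda>j. ketbra j j) \<circ> inv \<pi>"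
  have tr_others: "(\<Prod>j\<in>{1..<n}. tr SY (\<psi>s j)) = 1"
  proof (intro prod.neutral ballI)
    fix j assume "j \<in> {1..<n}"
    then have "inv \<pi> j \<in> SY" using permutes_in_image[OF permutes_inv[OF \<pi>]] by (auto simp: SY_eq)
    then show "tr SY (\<psi>s j) = 1" using density_ketbra[OF finite_sets(2)] by (simp add: \<psi>s_def density_def)
  qed
  have "R (a,b) (a',b) (x,y) (x',y) = app (SX \<times> SY) R (otimes (ketbra x x') (ketbra y y)) (a,b) (a',b)"
    using finite_sets x y by (simp add: app_ketbra otimes_ketbra)
  also have "\<dots> = ptr_rest SB n (EE (prod_in (ketbra x x') n \<psi>s)) (a,b) (a',b)"
    using op_eq_onD[OF E_reduction, of "(a,b)" "(a',b)"] a b tr_others by (simp add: \<psi>s_def inv_\<pi>_0)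
  also have "\<dots> = (\<Sum>cs\<in>BB. if cs y = b then EE (prod_in (ketbra x x') n (\<lambda>j. ketbra j j)) (a,cs) (a',cs) else 0)"
    unfolding \<psi>s_def perm_op_prod_in[OF \<pi>, symmetric] ptr_rest_permute[OF \<pi> a] inv_\<pi>_0 ..
  also have "\<dots> = (\<Sum>cs\<in>BB. if cs y = b then E (a,cs) (a',cs) (x,inputs_id) (x',inputs_id) else 0)"
    using cond_state_eq_app_E[of _ "ketbra x x'" a a'] cond_state_ketbra[OF x] by (simp cong: if_cong)
  finally show ?thesis .
qed

lemma R_kern_offdiag:
  assumes "a \<in> SA" "a' \<in> SA" "b \<in> SB" "b' \<in> SB" "x \<in> SX" "x' \<in> SX" "y \<in> SY" "y' \<in> SY"
    and "b \<noteq> b' \<or> y \<noteq> y'"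
  shows "R (a,b) (a',b') (x,y) (x',y') = 0"
proof -
  have "R (a,b) (a',b') (x,y) (x',y') = app (SX \<times> SY) R (otimes (ketbra x x') (ketbra y y')) (a,b) (a',b')"
    using assms finite_sets by (simp add: app_ketbra otimes_ketbra)
  also have "\<dots> = 0"
    using R_classical_B[OF classical_B] op_eq_onD[OF R_classical_Y[OF classical_Y]] assms
    by (auto simp: zero_op_def)
  finally show ?thesis .
qed

lemma R_kern_decomposition:
  assumes "u \<in> SA \<times> SB" "u' \<in> SA \<times> SB" "q \<in> SX \<times> SY" "q' \<in> SX \<times> SY"
  shows "R u u' q q' = (\<Sum>bs\<in>BB. complex_of_real (out_prob bs) * ktensor (alice_kern bs) (det_kern bs) u u' q q')"
proof -
  obtain a b a' b' x y x' y' where uq: "u = (a,b)" "u' = (a',b')" "q = (x,y)" "q' = (x',y')"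
    by (cases u; cases u'; cases q; cases q')
  have "(\<Sum>bs\<in>BB. complex_of_real (out_prob bs) * ktensor (alice_kern bs) (det_kern bs) u u' q q') =
      (\<Sum>bs\<in>BB. if b = b' \<and> y = y' \<and> bs y = b then E (a,bs) (a',bs) (x,inputs_id) (x',inputs_id) else 0)"
    using assms out_prob_alice_kern
    by (intro sum.cong refl) (auto simp: uq ktensor_def det_kern_def mult.assoc[symmetric])
  also have "\<dots> = R u u' q q'"
    using assms R_kern_diag R_kern_offdiag by (cases "b = b' \<and> y = y'") (auto simp: uq)
  finally show ?thesis ..
qed

lemma LOSR_free_R: "LOSR_free sX sY sA sB R"
proof (rule LOSR_freeI[where I=BB and p=out_prob and KA=alice_kern and KB=det_kern])
  fix \<rho> u u' assume "u \<in> SA \<times> SB" "u' \<in> SA \<times> SB"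
  then have "app (SX \<times> SY) R \<rho> u u' = app (SX \<times> SY) (\<lambda>u u' q q'. \<Sum>bs\<in>BB.
      complex_of_real (out_prob bs) * ktensor (alice_kern bs) (det_kern bs) u u' q q') \<rho> u u'"
    by (intro app_kern_cong R_kern_decomposition)
  then show "app (SX \<times> SY) R \<rho> u u' =
      (\<Sum>bs\<in>BB. complex_of_real (out_prob bs) * app (SX \<times> SY) (ktensor (alice_kern bs) (det_kern bs)) \<rho> u u')"
    by (simp only: app_kern_sum)
qed (use finite_sets out_prob_nonneg sum_out_prob channel_alice_kern channel_bob in auto)

end

theorem proposition9:
  fixes sX sY sA sB :: system and R :: "(nat \<times> nat, nat \<times> nat) kern"
  assumes "resource sX sY sA sB R"
    and "styp sY = TC" and "styp sB = TC"
  shows "(\<exists>E. sym_ext sX sY sA sB (sdim sY) R E) \<longleftrightarrow> LOSR_free sX sY sA sB R"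
proof
  assume "\<exists>E. sym_ext sX sY sA sB (sdim sY) R E"
  then obtain E where "sym_ext sX sY sA sB (sdim sY) R E" ..
  then interpret sym_extension sX sY sA sB R E using assms by unfold_locales
  show "LOSR_free sX sY sA sB R" by (rule LOSR_free_R)
next
  assume "LOSR_free sX sY sA sB R"
  with assms show "\<exists>E. sym_ext sX sY sA sB (sdim sY) R E" by (rule LOSR_free_imp_sym_ext)
qed

end
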